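(* Let $\mathbb{S}=[0,1]$ with $0$ and $1$ identified, and let $H:\mathbb{S}\times\mathbb{R}\times\mathbb{R}\to\mathbb{R}$ be $C^\infty$ with $\frac{\partial^2H}{\partial p^2}>0$, $p\mapsto H(x,p,u)$ superlinear for each $(x,u)$, and $|\frac{\partial H}{\partial u}|\le\kappa$ for some $\kappa>0$. Let $u_0$ be a viscosity solution of $H(x,u'(x),u(x))=0$ on $\mathbb{S}$ such that $\frac{\partial H}{\partial p}(x,u_0'(x),u_0(x))\ne0$ at every differentiability point $x$ of $u_0$. Set $B(x)=\frac{\partial H}{\partial p}(x,u_0'(x),u_0(x))$, $$\mu=\frac{\int_0^1\frac{\partial H}{\partial u}(\tau,u_0'(\tau),u_0(\tau))B(\tau)^{-1}d\tau}{\int_0^1B(\tau)^{-1}d\tau},\qquad \rho(x)=\exp\left\{\int_0^x\frac{\mu-\frac{\partial H}{\partial u}(\tau,u_0'(\tau),u_0(\tau))}{B(\tau)}\,d\tau\right\},$$ $Z=-\int_0^1B(\tau)^{-1}d\tau$, $\mathcal{T}=|Z|$, and $f(x)=\frac{2\pi}{Z}\int_0^x\left(-B(\tau)^{-1}\right)d\tau$. Assume $\mu<0$. Fix $x_0\in\mathbb{S}$ and for $\epsilon>0$ define $$w(x,t)=u_0(x)+\epsilon\rho(x)+\epsilon\rho(x)\sin\!\Big(-\frac{\pi}{2}+f(x)-f(x_0)+\frac{2\pi}{Z}t\Big),\quad (x,t)\in\mathbb{S}\times[0,+\infty).$$ Then there exists $\tilde\epsilon_1>0$ such that for every $\epsilon\in(0,\tilde\epsilon_1]$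 and all $(x,t)\in\mathbb{S}\times[0,+\infty)$, $$w(x,t+\mathcal{T})=w(x,t)\quad\text{and}\quad \partial_tw(x,t)+H(x,\partial_xw(x,t),w(x,t))\le0.$$
   Context: It is known that under these assumptions $u_0$ is of class $C^\infty$, so $B$ is smooth and nowhere zero, and $\rho$ is a smooth positive function on $\mathbb{S}$. *)

theory Defs
  imports "HOL-Analysis.Analysis"
begin

text \<open>The circle S = [0,1] with 0 and 1 identified is modelled by 1-periodic
functions on the real line.  H x p u is written curried.\<close>

definition Hx :: "(real \<Rightarrow> real \<Rightarrow> real \<Rightarrow> real) \<Rightarrow> real \<Rightarrow> real \<Rightarrow> real \<Rightarrow> real" where
  "Hx H x p u = deriv (\<lambda>y. H y p u) x"
definition Hp :: "(real \<Rightarrow> real \<Rightarrow> real \<Rightarrow> real) \<Rightarrow> real \<Rightarrow> real \<Rightarrow> real \<Rightarrow> real" where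
  "Hp H x p u = deriv (\<lambda>q. H x q u) p"
definition Hu :: "(real \<Rightarrow> real \<Rightarrow> real \<Rightarrow> real) \<Rightarrow> real \<Rightarrow> real \<Rightarrow> real \<Rightarrow> real" where
  "Hu H x p u = deriv (\<lambda>v. H x p v) u"

fun Ck :: "nat \<Rightarrow> (real \<Rightarrow> real \<Rightarrow> real \<Rightarrow> real) \<Rightarrow> bool" where
  "Ck 0 F = continuous_on UNIV (\<lambda>(x, p, u). F x p u)"
| "Ck (Suc k) F = ((\<forall>x p u. (\<lambda>(y, q, v). F y q v) differentiable (at (x, p, u)))
      \<and> Ck k (Hx F) \<and> Ck k (Hp F) \<and> Ck k (Hu F))"

definition smooth3 :: "(real \<Rightarrow> real \<Rightarrow> real \<Rightarrow> real) \<Rightarrow> bool" where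
  "smooth3 F \<longleftrightarrow> (\<forall>k. Ck k F)"

definition viscosity_subsolution :: "(real \<Rightarrow> real \<Rightarrow> real \<Rightarrow> real) \<Rightarrow> (real \<Rightarrow> real) \<Rightarrow> bool" where
  "viscosity_subsolution H v \<longleftrightarrow> continuous_on UNIV v \<and>
     (\<forall>\<phi> x. \<phi> C1_differentiable_on UNIV \<longrightarrow>
        (\<exists>e>0. \<forall>y. \<bar>y - x\<bar> < e \<longrightarrow> v y - \<phi> y \<le> v x - \<phi> x) \<longrightarrow>
        H x (deriv \<phi> x) (v x) \<le> 0)"

definition viscosity_supersolution :: "(real \<Rightarrow> real \<Rightarrow> real \<Rightarrow> real) \<Rightarrow> (real \<Rightarrow> real) \<Rightarrow> bool" where
  "viscosity_supersolution H v \<longleftrightarrow> continuous_on UNIV v \<and>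
     (\<forall>\<phi> x. \<phi> C1_differentiable_on UNIV \<longrightarrow>
        (\<exists>e>0. \<forall>y. \<bar>y - x\<bar> < e \<longrightarrow> v y - \<phi> y \<ge> v x - \<phi> x) \<longrightarrow>
        H x (deriv \<phi> x) (v x) \<ge> 0)"

definition viscosity_solution :: "(real \<Rightarrow> real \<Rightarrow> real \<Rightarrow> real) \<Rightarrow> (real \<Rightarrow> real) \<Rightarrow> bool" where
  "viscosity_solution H v \<longleftrightarrow> viscosity_subsolution H v \<and> viscosity_supersolution H v"

definition oint :: "real \<Rightarrow> real \<Rightarrow> (real \<Rightarrow> real) \<Rightarrow> real" where
  "oint a b g = (if a \<le> b then integral {a..b} g else - integral {b..a} g)"

definition Bf :: "(real \<Rightarrow> real \<Rightarrow> real \<Rightarrow> real) \<Rightarrow> (real \<Rightarrow> real) \<Rightarrow> real \<Rightarrow> real" where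
  "Bf H u0 x = Hp H x (deriv u0 x) (u0 x)"

definition muC :: "(real \<Rightarrow> real \<Rightarrow> real \<Rightarrow> real) \<Rightarrow> (real \<Rightarrow> real) \<Rightarrow> real" where
  "muC H u0 = integral {0..1} (\<lambda>\<tau>. Hu H \<tau> (deriv u0 \<tau>) (u0 \<tau>) / Bf H u0 \<tau>)
              / integral {0..1} (\<lambda>\<tau>. 1 / Bf H u0 \<tau>)"

definition rhoF :: "(real \<Rightarrow> real \<Rightarrow> real \<Rightarrow> real) \<Rightarrow> (real \<Rightarrow> real) \<Rightarrow> real \<Rightarrow> real" where
  "rhoF H u0 x = exp (oint 0 x (\<lambda>\<tau>. (muC H u0 - Hu H \<tau> (deriv u0 \<tau>) (u0 \<tau>)) / Bf H u0 \<tau>))"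

definition ZC :: "(real \<Rightarrow> real \<Rightarrow> real \<Rightarrow> real) \<Rightarrow> (real \<Rightarrow> real) \<Rightarrow> real" where
  "ZC H u0 = - integral {0..1} (\<lambda>\<tau>. 1 / Bf H u0 \<tau>)"

definition TC :: "(real \<Rightarrow> real \<Rightarrow> real \<Rightarrow> real) \<Rightarrow> (real \<Rightarrow> real) \<Rightarrow> real" where
  "TC H u0 = \<bar>ZC H u0\<bar>"

definition fF :: "(real \<Rightarrow> real \<Rightarrow> real \<Rightarrow> real) \<Rightarrow> (real \<Rightarrow> real) \<Rightarrow> real \<Rightarrow> real" where
  "fF H u0 x = 2 * pi / ZC H u0 * oint 0 x (\<lambda>\<tau>. - (1 / Bf H u0 \<tau>))"

definition wF :: "(real \<Rightarrow> real \<Rightarrow> real \<Rightarrow> real) \<Rightarrow> (real \<Rightarrow> real) \<Rightarrow> real \<Rightarrow> real \<Rightarrow> real \<Rightarrow> real \<Rightarrow> real" where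
  "wF H u0 x0 \<epsilon> x t = u0 x + \<epsilon> * rhoF H u0 x
     + \<epsilon> * rhoF H u0 x * sin (- pi / 2 + fF H u0 x - fF H u0 x0 + 2 * pi / ZC H u0 * t)"

end

(* The sublevel set {p. H x p (u0 x) <= 0} is nonempty (test the subsolution property at a
   maximum of u0 minus a steep parabola), bounded (superlinearity) and, by strict convexity, an
   interval [pmin x, pmax x] depending continuously on x.  If phi has a continuous 1-periodic
   derivative and H(x, phi', u0) has a constant strict sign, the viscosity inequalities forbid
   local minima of phi - u0 or of u0 - phi, so phi - u0 is strictly monotone in the direction of
   its drift phi 1 - phi 0.  Applied to primitives of pmax + s, pmin - s and pmin + t (pmax - pmin)
   this squeezes u0 between the primitives Pmin and Pmax and forces it to coincide with one of
   them up to a constant; nondegeneracy excludes pmin x = pmax x, where u0 would be differentiable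
   at the minimum point of p |-> H x p (u0 x).  Hence u0 is C^1 and H(x, u0', u0) = 0.

   For w = u0 + eps rho (1 + sin theta), the transport equations solved by rho and by the phase
   theta reduce the first-order part of w_t + H(x, w_x, w) to eps mu rho (1 + sin theta), while
   cos^2 theta <= 2 (1 + sin theta) bounds the second-order Taylor remainder by a multiple of
   eps^2 (1 + sin theta).  Since mu < 0, the sum is nonpositive for small eps. *)

theory Submission
  imports Defs
begin

lemma smooth3_Ck: "smooth3 F \<Longrightarrow> Ck k F"
  unfolding smooth3_def by blast

lemma smooth3_Hp:
  assumes "smooth3 F"
  shows "smooth3 (Hp F)"
  unfolding smooth3_def
proof
  show "Ck k (Hp F)" for k
    using smooth3_Ck[OF assms, of "Suc k"] unfolding Ck.simps(2) by blast
qed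

lemma smooth3_Hu:
  assumes "smooth3 F"
  shows "smooth3 (Hu F)"
  unfolding smooth3_def
proof
  show "Ck k (Hu F)" for k
    using smooth3_Ck[OF assms, of "Suc k"] unfolding Ck.simps(2) by blast
qed

lemma smooth3_continuous: "smooth3 F \<Longrightarrow> continuous_on UNIV (\<lambda>(x, p, u). F x p u)"
  using smooth3_Ck[of F 0] unfolding Ck.simps(1) .

lemma smooth3_differentiable:
  "smooth3 F \<Longrightarrow> (\<lambda>(y, q, v). F y q v) differentiable (at (x, p, u))"
  using smooth3_Ck[of F "Suc 0"] unfolding Ck.simps(2) by blast

lemma smooth3_has_derivative_p:
  assumes "smooth3 F"
  shows "((\<lambda>q. F x q v) has_real_derivative Hp F x p v) (at p)"
proof -
  have "(\<lambda>q. (\<lambda>(y, q, v). F y q v) (x, q, v)) differentiable (at p)"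
    by (rule differentiable_compose[of "\<lambda>(y, q, v). F y q v"])
      (auto intro: smooth3_differentiable[OF assms])
  then show ?thesis
    unfolding Hp_def by (simp add: DERIV_deriv_iff_real_differentiable)
qed

lemma smooth3_has_derivative_u:
  assumes "smooth3 F"
  shows "((\<lambda>v. F x p v) has_real_derivative Hu F x p v) (at v)"
proof -
  have "(\<lambda>v. (\<lambda>(y, q, v). F y q v) (x, p, v)) differentiable (at v)"
    by (rule differentiable_compose[of "\<lambda>(y, q, v). F y q v"])
      (auto intro: smooth3_differentiable[OF assms])
  then show ?thesis
    unfolding Hu_def by (simp add: DERIV_deriv_iff_real_differentiable)
qed

lemma continuous_on_compose3:
  fixes F :: "real \<Rightarrow> real \<Rightarrow> real \<Rightarrow> real"
  assumes "continuous_on UNIV (\<lambda>(x, p, u). F x p u)"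
    and "continuous_on S a" "continuous_on S b" "continuous_on S c"
  shows "continuous_on S (\<lambda>z. F (a z) (b z) (c z))"
proof -
  have "continuous_on S ((\<lambda>(x, p, u). F x p u) \<circ> (\<lambda>z. (a z, b z, c z)))"
    using assms by (intro continuous_on_compose continuous_intros) (auto intro: continuous_on_subset)
  then show ?thesis by (simp add: o_def)
qed

lemma tendsto_compose3:
  fixes F :: "real \<Rightarrow> real \<Rightarrow> real \<Rightarrow> real"
  assumes "continuous_on UNIV (\<lambda>(x, p, u). F x p u)"
    and "(a \<longlongrightarrow> a0) G" "(b \<longlongrightarrow> b0) G" "(c \<longlongrightarrow> c0) G"
  shows "((\<lambda>z. F (a z) (b z) (c z)) \<longlongrightarrow> F a0 b0 c0) G"
proof -
  have "isCont (\<lambda>(x, p, u). F x p u) (a0, b0, c0)"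
    using assms(1) continuous_on_eq_continuous_at by blast
  from isCont_tendsto_compose[OF this tendsto_Pair[OF assms(2) tendsto_Pair[OF assms(3,4)]]]
  show ?thesis by simp
qed

lemma oint_has_real_derivative:
  fixes g :: "real \<Rightarrow> real"
  assumes g: "continuous_on UNIV g"
  shows "((\<lambda>y. oint 0 y g) has_real_derivative g x) (at x)"
proof -
  define N where "N = \<bar>x\<bar> + 1"
  have int: "g integrable_on {a..b}" for a b
    using g by (auto intro: integrable_continuous_interval continuous_on_subset)
  have N: "0 \<le> N" by (simp add: N_def)
  have oint_eq: "oint 0 y g = integral {-N..y} g - integral {-N..0} g" if "-N \<le> y" for y
    using that N Henstock_Kurzweil_Integration.integral_combine[OF _ _ int, of "-N" 0 y]
      Henstock_Kurzweil_Integration.integral_combine[OF _ _ int, of "-N" y 0]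
    by (cases "0 \<le> y") (auto simp: oint_def)
  have "((\<lambda>y. integral {-N..y} g) has_real_derivative g x) (at x within {-N..N})"
    using g by (intro integral_has_real_derivative) (auto simp: N_def intro: continuous_on_subset)
  moreover have "at x within {-N..N} = at x"
    by (rule at_within_interior) (auto simp: N_def abs_less_iff)
  ultimately have "((\<lambda>y. integral {-N..y} g) has_real_derivative g x) (at x)"
    by simp
  then have "((\<lambda>y. integral {-N..y} g - integral {-N..0} g) has_real_derivative g x) (at x)"
    using DERIV_diff[OF _ DERIV_const] by simp
  then show ?thesis
    by (rule has_field_derivative_transform_within_open[where S="{-N<..<N}"])
      (auto simp: N_def oint_eq)
qed

lemma antiderivative_of_periodic_shift:
  fixes G g :: "real \<Rightarrow> real"
  assumes G: "\<And>x. (G has_real_derivative g x) (at x)" and g_per: "\<And>x. g (x + 1) = g x"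
  shows "G (x + 1) = G x + (G 1 - G 0)"
proof -
  have "((\<lambda>x. G (x + 1)) has_real_derivative g x) (at x)" for x
    using G[of "x + 1"] g_per[of x] DERIV_shift by metis
  then have "((\<lambda>x. G (x + 1) - G x) has_real_derivative 0) (at x)" for x
    using DERIV_diff[OF _ G[of x]] by fastforce
  then show ?thesis
    using DERIV_isconst_all[of "\<lambda>x. G (x + 1) - G x" x 0] by simp
qed

lemma le_of_forall_lt_add_scaled:
  fixes X Y C :: real
  assumes "\<And>s. 0 < s \<Longrightarrow> s < 1 \<Longrightarrow> X < Y + s * C"
  shows "X \<le> Y"
proof (rule tendsto_le[OF trivial_limit_at_right_real])
  show "((\<lambda>s. Y + s * C) \<longlongrightarrow> Y) (at_right 0)"
    by (auto intro!: tendsto_eq_intros)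
  show "\<forall>\<^sub>F s in at_right 0. X \<le> Y + s * C"
    by (rule eventually_mono[OF eventually_at_right_real[of 0 1]]) (auto intro: less_imp_le assms)
qed simp

definition local_min_at :: "(real \<Rightarrow> real) \<Rightarrow> real \<Rightarrow> bool" where
  "local_min_at f z \<longleftrightarrow> (\<exists>e>0. \<forall>y. \<bar>y - z\<bar> < e \<longrightarrow> f z \<le> f y)"

lemma local_min_at_between:
  fixes f :: "real \<Rightarrow> real"
  assumes f: "continuous_on UNIV f" and "a < c" "c < b" "f c \<le> f a" "f c \<le> f b"
  obtains z where "local_min_at f z"
proof -
  obtain z where z: "z \<in> {a..b}" "\<And>y. y \<in> {a..b} \<Longrightarrow> f z \<le> f y"
    using continuous_attains_inf[of "{a..b}" f, OF compact_Icc _ continuous_on_subset[OF f]] assms(2,3)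
    by auto
  obtain m where m: "a < m" "m < b" "\<And>y. y \<in> {a..b} \<Longrightarrow> f m \<le> f y"
  proof (cases "z = a \<or> z = b")
    case True
    then have "f c \<le> f y" if "y \<in> {a..b}" for y
      using z assms(4,5) that by force
    then show ?thesis using that[of c] assms(2,3) by blast
  qed (use z that in force)
  have "local_min_at f m"
    unfolding local_min_at_def using m
    by (intro exI[of _ "min (m - a) (b - m)"]) (auto simp: abs_less_iff)
  then show thesis by (rule that)
qed

lemma no_local_min_shift_sign:
  fixes f :: "real \<Rightarrow> real"
  assumes f_cont: "continuous_on UNIV f" and no_min: "\<And>z. \<not> local_min_at f z"
    and f_shift: "\<And>x. f (x + 1) = f x + d" and "a < b"
  shows "0 < d * (f b - f a)"
proof (cases d "0::real" rule: linorder_cases)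
  case less
  have "f b < f a"
  proof (rule ccontr)
    assume "\<not> f b < f a"
    then show False
      using local_min_at_between[OF f_cont, of "a - 1" a b] f_shift[of "a - 1"] less \<open>a < b\<close> no_min
      by force
  qed
  then show ?thesis using less by (simp add: mult_neg_neg)
next
  case equal
  then show ?thesis
    using local_min_at_between[OF f_cont, of 0 1 2] f_shift[of 0] f_shift[of 1] no_min by force
next
  case greater
  have "f a < f b"
  proof (rule ccontr)
    assume "\<not> f a < f b"
    then show False
      using local_min_at_between[OF f_cont, of a b "b + 1"] f_shift[of b] greater \<open>a < b\<close> no_min
      by force
  qed
  then show ?thesis using greater by simp
qed

lemma strict_chord_of_deriv2_pos:
  fixes h h' h'' :: "real \<Rightarrow> real"
  assumes h': "\<And>q. (h has_real_derivative h' q) (at q)"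
    and h'': "\<And>q. (h' has_real_derivative h'' q) (at q)"
    and pos: "\<And>q. 0 < h'' q" and "a < p" "p < b"
  shows "h p * (b - a) < (b - p) * h a + (p - a) * h b"
proof -
  obtain z1 where z1: "a < z1" "z1 < p" "h p - h a = (p - a) * h' z1"
    using MVT2[of a p h h'] h' \<open>a < p\<close> by blast
  obtain z2 where z2: "p < z2" "z2 < b" "h b - h p = (b - p) * h' z2"
    using MVT2[of p b h h'] h' \<open>p < b\<close> by blast
  obtain z3 where "h' z2 - h' z1 = (z2 - z1) * h'' z3"
    using MVT2[of z1 z2 h' h''] h'' z1 z2 by (meson order.strict_trans)
  then have "h' z1 < h' z2"
    using pos[of z3] z1 z2 by (smt (verit) mult_pos_pos)
  have ha: "h a = h p - (p - a) * h' z1" and hb: "h b = h p + (b - p) * h' z2"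
    using z1(3) z2(3) by simp_all
  have "(b - p) * h a + (p - a) * h b = h p * (b - a) + (b - p) * (p - a) * (h' z2 - h' z1)"
    unfolding ha hb by (simp add: algebra_simps)
  moreover have "0 < (b - p) * (p - a) * (h' z2 - h' z1)"
    using \<open>h' z1 < h' z2\<close> assms(4,5) by simp
  ultimately show ?thesis by linarith
qed

context
  fixes h :: "real \<Rightarrow> real"
  assumes chord: "\<And>a p b. a < p \<Longrightarrow> p < b \<Longrightarrow> h p * (b - a) < (b - p) * h a + (p - a) * h b"
begin

lemma strict_chord_sublevel_upper:
  assumes "m < b" "h m \<le> h b" "0 < h b" "h p \<le> 0"
  shows "p < b"
proof (rule ccontr)
  assume "\<not> p < b"
  then consider "b < p" | "p = b" by linarith
  then show False
  proof cases
    case 1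
    have "h b * (p - m) < (p - b) * h m + (b - m) * h p"
      using chord assms(1) 1 by blast
    also have "\<dots> \<le> (p - b) * h b + (b - m) * h p"
      using assms(2) 1 by (intro add_right_mono mult_left_mono) auto
    finally have "(b - m) * h b < (b - m) * h p"
      by (simp add: algebra_simps)
    then have "h b < h p" using assms(1) by simp
    then show False using assms(3,4) by linarith
  next
    case 2
    from assms(4) have "h b \<le> 0" unfolding 2 .
    then show False using assms(3) by linarith
  qed
qed

lemma strict_chord_sublevel_lower:
  assumes "a < m" "h m \<le> h a" "0 < h a" "h p \<le> 0"
  shows "a < p"
proof (rule ccontr)
  assume "\<not> a < p"
  then consider "p < a" | "p = a" by linarith
  then show False
  proof cases
    case 1
    have "h a * (m - p) < (m - a) * h p + (a - p) * h m"
      using chord assms(1) 1 by blast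
    also have "\<dots> \<le> (m - a) * h p + (a - p) * h a"
      using assms(2) 1 by (intro add_left_mono mult_left_mono) auto
    finally have "(m - a) * h a < (m - a) * h p"
      by (simp add: algebra_simps)
    then have "h a < h p" using assms(1) by simp
    then show False using assms(3,4) by linarith
  next
    case 2
    from assms(4) have "h a \<le> 0" unfolding 2 .
    then show False using assms(3) by linarith
  qed
qed

end

lemma taylor_remainder_bound:
  fixes f f' f'' :: "real \<Rightarrow> real"
  assumes f': "\<And>q. (f has_real_derivative f' q) (at q)"
    and f'': "\<And>q. (f' has_real_derivative f'' q) (at q)"
    and bound: "\<And>q. q \<in> {min p (p + h)..max p (p + h)} \<Longrightarrow> \<bar>f'' q\<bar> \<le> M"
  shows "\<bar>f (p + h) - f p - f' p * h\<bar> \<le> M * h\<^sup>2"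
proof -
  let ?I = "{min p (p + h)..max p (p + h)}"
  have M: "0 \<le> M" using bound[of p] by force
  have f'_close: "\<bar>f' q - f' p\<bar> \<le> M * \<bar>h\<bar>" if q: "q \<in> ?I" for q
  proof -
    have "norm (f' q - f' p) \<le> M * norm (q - p)"
      by (rule field_differentiable_bound[where S="?I"])
        (use q in \<open>auto intro: has_field_derivative_at_within[OF f''] bound\<close>)
    then have "\<bar>f' q - f' p\<bar> \<le> M * \<bar>q - p\<bar>" by simp
    also have "\<dots> \<le> M * \<bar>h\<bar>"
      using q M by (intro mult_left_mono) auto
    finally show ?thesis .
  qed
  have linearized: "((\<lambda>y. f y - f' p * y) has_real_derivative f' q - f' p) (at q)" for q
    using DERIV_diff[OF f' DERIV_cmult[OF DERIV_ident]] by simp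
  have "norm ((f (p + h) - f' p * (p + h)) - (f p - f' p * p)) \<le> M * \<bar>h\<bar> * norm ((p + h) - p)"
    by (rule field_differentiable_bound[where S="?I" and f="\<lambda>y. f y - f' p * y" and f'="\<lambda>q. f' q - f' p"])
      (auto intro: has_field_derivative_at_within[OF linearized] f'_close)
  then show ?thesis
    by (simp add: algebra_simps power2_eq_square abs_mult)
qed

lemma increment_le_of_deriv_bound:
  fixes f f' :: "real \<Rightarrow> real"
  assumes f': "\<And>q. (f has_real_derivative f' q) (at q)"
    and bound: "\<And>q. q \<in> {min p (p + h)..max p (p + h)} \<Longrightarrow> \<bar>f' q\<bar> \<le> M"
  shows "\<bar>f (p + h) - f p\<bar> \<le> M * \<bar>h\<bar>"
proof -
  have "norm (f (p + h) - f p) \<le> M * norm ((p + h) - p)"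
    by (rule field_differentiable_bound[where S="{min p (p + h)..max p (p + h)}"])
      (auto intro: has_field_derivative_at_within[OF f'] bound)
  then show ?thesis by simp
qed

lemma abs_le_one_plus_square: "\<bar>x\<bar> \<le> 1 + (x::real)\<^sup>2"
proof -
  have "2 * \<bar>x\<bar> \<le> 1 + x\<^sup>2"
    using zero_le_power2[of "\<bar>x\<bar> - 1"] by (simp add: power2_diff)
  then show ?thesis by linarith
qed

lemma abs_mult_le_one_of_sum_squares:
  fixes a b A \<epsilon> :: real
  assumes "a\<^sup>2 + b\<^sup>2 \<le> 2 * A" "0 \<le> \<epsilon>" "\<epsilon> * (1 + 2 * A) \<le> 1"
  shows "\<bar>\<epsilon> * a\<bar> \<le> 1" and "\<bar>\<epsilon> * b\<bar> \<le> 1"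
proof -
  have bound: "\<bar>\<epsilon> * c\<bar> \<le> 1" if "c\<^sup>2 \<le> 2 * A" for c
  proof -
    have "\<bar>c\<bar> \<le> 1 + 2 * A" using abs_le_one_plus_square[of c] that by linarith
    then have "\<epsilon> * \<bar>c\<bar> \<le> \<epsilon> * (1 + 2 * A)" using assms(2) by (rule mult_left_mono)
    moreover have "\<bar>\<epsilon> * c\<bar> = \<epsilon> * \<bar>c\<bar>" using assms(2) by (simp add: abs_mult)
    ultimately show ?thesis using assms(3) by linarith
  qed
  show "\<bar>\<epsilon> * a\<bar> \<le> 1"
    by (rule bound) (use assms(1) zero_le_power2[of b] in linarith)
  show "\<bar>\<epsilon> * b\<bar> \<le> 1"
    by (rule bound) (use assms(1) zero_le_power2[of a] in linarith)
qed

lemma abs_mult_le_sum_squares: "\<bar>x\<bar> * \<bar>y\<bar> \<le> x\<^sup>2 + (y::real)\<^sup>2"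
proof -
  have "2 * (\<bar>x\<bar> * \<bar>y\<bar>) \<le> x\<^sup>2 + y\<^sup>2"
    using zero_le_power2[of "\<bar>x\<bar> - \<bar>y\<bar>"] by (simp add: power2_diff)
  moreover have "0 \<le> \<bar>x\<bar> * \<bar>y\<bar>" by simp
  ultimately show ?thesis by linarith
qed

lemma one_plus_sin_square_bound:
  fixes P Q R \<theta> :: real
  shows "(P * (1 + sin \<theta>) + Q * cos \<theta>)\<^sup>2 + (R * (1 + sin \<theta>))\<^sup>2
    \<le> (1 + sin \<theta>) * (4 * P\<^sup>2 + 4 * Q\<^sup>2 + 2 * R\<^sup>2)"
proof -
  define s where "s = 1 + sin \<theta>"
  have s: "0 \<le> s" "s \<le> 2"
    unfolding s_def using sin_ge_minus_one[of \<theta>] sin_le_one[of \<theta>] by linarith+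
  have "(cos \<theta>)\<^sup>2 = (1 - sin \<theta>) * s"
    unfolding s_def cos_squared_eq by (simp add: algebra_simps power2_eq_square)
  also have "\<dots> \<le> 2 * s"
    using s sin_ge_minus_one[of \<theta>] by (intro mult_right_mono) auto
  finally have cos2: "(cos \<theta>)\<^sup>2 \<le> 2 * s" .
  have s2: "s\<^sup>2 \<le> 2 * s"
    using s by (simp add: power2_eq_square mult_right_mono)
  have "(P * s + Q * cos \<theta>)\<^sup>2 \<le> 2 * (P\<^sup>2 * s\<^sup>2) + 2 * (Q\<^sup>2 * (cos \<theta>)\<^sup>2)"
    using zero_le_power2[of "P * s - Q * cos \<theta>"] by (simp add: power2_eq_square algebra_simps)
  also have "\<dots> \<le> 2 * (P\<^sup>2 * (2 * s)) + 2 * (Q\<^sup>2 * (2 * s))"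
    using s2 cos2 by (intro add_mono mult_left_mono) auto
  finally show ?thesis
    using mult_left_mono[OF s2, of "R\<^sup>2"] unfolding s_def[symmetric]
    by (simp add: power_mult_distrib algebra_simps)
qed

lemma abs_between_le:
  fixes p h q P :: real
  shows "\<bar>p\<bar> \<le> P \<Longrightarrow> \<bar>h\<bar> \<le> 1 \<Longrightarrow> q \<in> {min p (p + h)..max p (p + h)} \<Longrightarrow> \<bar>q\<bar> \<le> P + 1"
  unfolding atLeastAtMost_iff abs_le_iff by linarith

lemma smooth3_bounded_on_box:
  fixes G :: "real \<Rightarrow> real \<Rightarrow> real \<Rightarrow> real" and a b P V :: real
  assumes G: "smooth3 G"
  obtains M where "0 \<le> M" "\<And>x q w. x \<in> {a..b} \<Longrightarrow> \<bar>q\<bar> \<le> P \<Longrightarrow> \<bar>w\<bar> \<le> V \<Longrightarrow> \<bar>G x q w\<bar> \<le> M"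
proof -
  let ?K = "{a..b} \<times> {-P..P} \<times> {-V..V}"
  have K: "compact ?K" by (intro compact_Times compact_Icc)
  have cont: "continuous_on ?K (\<lambda>(x, q, w). G x q w)"
    using smooth3_continuous[OF G] by (rule continuous_on_subset) simp
  obtain M where M: "0 \<le> M" "\<And>z. z \<in> ?K \<Longrightarrow> norm ((\<lambda>(x, q, w). G x q w) z) \<le> M"
    by (rule continuous_on_compact_bound[OF K cont]) (rule that)
  show thesis
  proof (rule that[OF M(1)])
    fix x q w assume "x \<in> {a..b}" "\<bar>q\<bar> \<le> P" "\<bar>w\<bar> \<le> V"
    then have "(x, q, w) \<in> ?K" by (simp add: abs_le_iff)
    from M(2)[OF this] show "\<bar>G x q w\<bar> \<le> M" by simp
  qed
qed

lemma smooth3_second_order_upper_bound: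
  fixes F :: "real \<Rightarrow> real \<Rightarrow> real \<Rightarrow> real" and a b P V :: real
  assumes F: "smooth3 F"
  obtains L :: real where "0 \<le> L"
    and "\<And>x p v h k. x \<in> {a..b} \<Longrightarrow> \<bar>p\<bar> \<le> P \<Longrightarrow> \<bar>v\<bar> \<le> V \<Longrightarrow> \<bar>h\<bar> \<le> 1 \<Longrightarrow> \<bar>k\<bar> \<le> 1 \<Longrightarrow>
      F x (p + h) (v + k) \<le> F x p v + Hp F x p v * h + Hu F x p v * k + L * (h\<^sup>2 + k\<^sup>2)"
proof -
  obtain Mpp where Mpp: "0 \<le> Mpp"
    "\<And>x q w. x \<in> {a..b} \<Longrightarrow> \<bar>q\<bar> \<le> P + 1 \<Longrightarrow> \<bar>w\<bar> \<le> V + 1 \<Longrightarrow> \<bar>Hp (Hp F) x q w\<bar> \<le> Mpp"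
    by (rule smooth3_bounded_on_box[OF smooth3_Hp[OF smooth3_Hp[OF F]], where a=a and b=b and P="P + 1" and V="V + 1"])
      (rule that)
  obtain Mpu where Mpu: "0 \<le> Mpu"
    "\<And>x q w. x \<in> {a..b} \<Longrightarrow> \<bar>q\<bar> \<le> P + 1 \<Longrightarrow> \<bar>w\<bar> \<le> V + 1 \<Longrightarrow> \<bar>Hu (Hp F) x q w\<bar> \<le> Mpu"
    by (rule smooth3_bounded_on_box[OF smooth3_Hu[OF smooth3_Hp[OF F]], where a=a and b=b and P="P + 1" and V="V + 1"])
      (rule that)
  obtain Muu where Muu: "0 \<le> Muu"
    "\<And>x q w. x \<in> {a..b} \<Longrightarrow> \<bar>q\<bar> \<le> P + 1 \<Longrightarrow> \<bar>w\<bar> \<le> V + 1 \<Longrightarrow> \<bar>Hu (Hu F) x q w\<bar> \<le> Muu"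
    by (rule smooth3_bounded_on_box[OF smooth3_Hu[OF smooth3_Hu[OF F]], where a=a and b=b and P="P + 1" and V="V + 1"])
      (rule that)
  show thesis
  proof (rule that[of "Mpp + Mpu + Muu"])
    fix x p v h k :: real
    assume x: "x \<in> {a..b}" and bounds: "\<bar>p\<bar> \<le> P" "\<bar>v\<bar> \<le> V" "\<bar>h\<bar> \<le> 1" "\<bar>k\<bar> \<le> 1"
    have p1: "\<bar>p\<bar> \<le> P + 1" and vk: "\<bar>v + k\<bar> \<le> V + 1"
      using bounds by linarith+
    note near_p = abs_between_le[OF bounds(1,3)] and near_v = abs_between_le[OF bounds(2,4)]
    have Ep: "\<bar>F x (p + h) (v + k) - F x p (v + k) - Hp F x p (v + k) * h\<bar> \<le> Mpp * h\<^sup>2"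
      by (rule taylor_remainder_bound[OF smooth3_has_derivative_p[OF F]
            smooth3_has_derivative_p[OF smooth3_Hp[OF F]] Mpp(2)[OF x near_p vk]])
    have Eu: "\<bar>F x p (v + k) - F x p v - Hu F x p v * k\<bar> \<le> Muu * k\<^sup>2"
      by (rule taylor_remainder_bound[OF smooth3_has_derivative_u[OF F]
            smooth3_has_derivative_u[OF smooth3_Hu[OF F]] Muu(2)[OF x p1 near_v]])
    have "\<bar>Hp F x p (v + k) - Hp F x p v\<bar> \<le> Mpu * \<bar>k\<bar>"
      by (rule increment_le_of_deriv_bound[OF smooth3_has_derivative_u[OF smooth3_Hp[OF F]]
            Mpu(2)[OF x p1 near_v]])
    then have "\<bar>Hp F x p (v + k) - Hp F x p v\<bar> * \<bar>h\<bar> \<le> Mpu * \<bar>k\<bar> * \<bar>h\<bar>"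
      by (simp add: mult_right_mono)
    also have "\<dots> \<le> Mpu * (h\<^sup>2 + k\<^sup>2)"
      using mult_left_mono[OF abs_mult_le_sum_squares[of k h] Mpu(1)] by (simp add: mult.assoc add.commute)
    finally have Epu: "\<bar>(Hp F x p (v + k) - Hp F x p v) * h\<bar> \<le> Mpu * (h\<^sup>2 + k\<^sup>2)"
      by (simp add: abs_mult)
    have "F x (p + h) (v + k) - F x p v - Hp F x p v * h - Hu F x p v * k
        = (F x (p + h) (v + k) - F x p (v + k) - Hp F x p (v + k) * h)
          + (F x p (v + k) - F x p v - Hu F x p v * k) + (Hp F x p (v + k) - Hp F x p v) * h"
      by (simp add: algebra_simps)
    also have "\<dots> \<le> Mpp * h\<^sup>2 + Muu * k\<^sup>2 + Mpu * (h\<^sup>2 + k\<^sup>2)"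
      using Ep Eu Epu by linarith
    also have "\<dots> \<le> (Mpp + Mpu + Muu) * (h\<^sup>2 + k\<^sup>2)"
      using Mpp(1) Muu(1) by (simp add: algebra_simps)
    finally show "F x (p + h) (v + k) \<le> F x p v + Hp F x p v * h + Hu F x p v * k + (Mpp + Mpu + Muu) * (h\<^sup>2 + k\<^sup>2)"
      by simp
  qed (use Mpp Mpu Muu in simp)
qed

section \<open>The sublevel sets of the Hamiltonian along a viscosity solution\<close>

locale convex_hj_solution =
  fixes H :: "real \<Rightarrow> real \<Rightarrow> real \<Rightarrow> real" and u :: "real \<Rightarrow> real"
  assumes H_smooth: "smooth3 H"
    and H_per: "\<And>x p v. H (x + 1) p v = H x p v"
    and H_conv: "\<And>x p v. deriv (\<lambda>q. Hp H x q v) p > 0"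
    and H_superlin: "\<And>x v. filterlim (\<lambda>p. H x p v / \<bar>p\<bar>) at_top at_infinity"
    and u_per: "\<And>x. u (x + 1) = u x"
    and u_visc: "viscosity_solution H u"
begin

definition Ham :: "real \<Rightarrow> real \<Rightarrow> real" where
  "Ham x p = H x p (u x)"

lemma u_continuous: "continuous_on UNIV u"
  using u_visc unfolding viscosity_solution_def viscosity_subsolution_def by blast

lemma Ham_periodic: "Ham (x + 1) p = Ham x p"
  unfolding Ham_def by (simp add: H_per u_per)

lemma tendsto_Ham:
  assumes "(a \<longlongrightarrow> a0) F" "(b \<longlongrightarrow> b0) F"
  shows "((\<lambda>z. Ham (a z) (b z)) \<longlongrightarrow> Ham a0 b0) F"
proof -
  have "((\<lambda>z. u (a z)) \<longlongrightarrow> u a0) F"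
    by (rule isCont_tendsto_compose[OF _ assms(1)])
      (use u_continuous in \<open>simp add: continuous_on_eq_continuous_at\<close>)
  then show ?thesis
    unfolding Ham_def by (rule tendsto_compose3[OF smooth3_continuous[OF H_smooth] assms])
qed

lemma tendsto_Ham_nhds: "((\<lambda>w. Ham w p) \<longlongrightarrow> Ham y p) (nhds y)"
  by (rule tendsto_Ham[OF filterlim_ident tendsto_const])

lemma eventually_Ham_gt: "c < Ham y p \<Longrightarrow> \<forall>\<^sub>F w in nhds y. c < Ham w p"
  by (rule order_tendstoD(1)[OF tendsto_Ham_nhds])

lemma eventually_Ham_lt: "Ham y p < c \<Longrightarrow> \<forall>\<^sub>F w in nhds y. Ham w p < c"
  by (rule order_tendstoD(2)[OF tendsto_Ham_nhds])

lemma eventually_Ham_less: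
  assumes "Ham y p < Ham y q"
  shows "\<forall>\<^sub>F w in nhds y. Ham w p < Ham w q"
proof -
  have "((\<lambda>w. Ham w q - Ham w p) \<longlongrightarrow> Ham y q - Ham y p) (nhds y)"
    by (intro tendsto_diff tendsto_Ham_nhds)
  from order_tendstoD(1)[OF this, of 0] assms show ?thesis
    by (auto elim: eventually_mono)
qed

lemma Ham_has_derivative: "((\<lambda>q. Ham x q) has_real_derivative Hp H x p (u x)) (at p)"
  unfolding Ham_def by (rule smooth3_has_derivative_p[OF H_smooth])

lemma Ham_strict_chord:
  "a < p \<Longrightarrow> p < b \<Longrightarrow> Ham x p * (b - a) < (b - p) * Ham x a + (p - a) * Ham x b"
  by (rule strict_chord_of_deriv2_pos[OF Ham_has_derivative
        smooth3_has_derivative_p[OF smooth3_Hp[OF H_smooth]] H_conv[folded Hp_def]])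

lemma Ham_sublevel_upper:
  assumes "m < b" "Ham x m \<le> Ham x b" "0 < Ham x b" "Ham x p \<le> 0"
  shows "p < b"
  by (rule strict_chord_sublevel_upper[of "Ham x", OF _ assms]) (rule Ham_strict_chord)

lemma Ham_sublevel_lower:
  assumes "a < m" "Ham x m \<le> Ham x a" "0 < Ham x a" "Ham x p \<le> 0"
  shows "a < p"
  by (rule strict_chord_sublevel_lower[of "Ham x", OF _ assms]) (rule Ham_strict_chord)

lemma subsolution_test:
  assumes \<phi>: "\<And>x. (\<phi> has_real_derivative \<phi>' x) (at x)" and "continuous_on UNIV \<phi>'"
    and "local_min_at (\<lambda>y. \<phi> y - u y) z"
  shows "Ham z (\<phi>' z) \<le> 0"
proof -
  have "\<phi> C1_differentiable_on UNIV"
    unfolding C1_differentiable_on_def using assms(1,2) has_real_derivative_iff_has_vector_derivative by blast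
  moreover obtain e where "0 < e" "\<forall>y. \<bar>y - z\<bar> < e \<longrightarrow> u y - \<phi> y \<le> u z - \<phi> z"
    using assms(3) unfolding local_min_at_def by force
  ultimately have "H z (deriv \<phi> z) (u z) \<le> 0"
    using u_visc unfolding viscosity_solution_def viscosity_subsolution_def by blast
  then show ?thesis
    unfolding Ham_def using DERIV_imp_deriv[OF \<phi>] by simp
qed

lemma supersolution_test:
  assumes \<phi>: "\<And>x. (\<phi> has_real_derivative \<phi>' x) (at x)" and "continuous_on UNIV \<phi>'"
    and "local_min_at (\<lambda>y. u y - \<phi> y) z"
  shows "0 \<le> Ham z (\<phi>' z)"
proof -
  have "\<phi> C1_differentiable_on UNIV"
    unfolding C1_differentiable_on_def using assms(1,2) has_real_derivative_iff_has_vector_derivative by blast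
  moreover obtain e where "0 < e" "\<forall>y. \<bar>y - z\<bar> < e \<longrightarrow> u z - \<phi> z \<le> u y - \<phi> y"
    using assms(3) unfolding local_min_at_def by force
  ultimately have "0 \<le> H z (deriv \<phi> z) (u z)"
    using u_visc unfolding viscosity_solution_def viscosity_supersolution_def by blast
  then show ?thesis
    unfolding Ham_def using DERIV_imp_deriv[OF \<phi>] by simp
qed

lemma sublevel_bounded_near:
  obtains P \<delta> where "0 < \<delta>" "\<And>w p. \<bar>w - x\<bar> < \<delta> \<Longrightarrow> Ham w p \<le> 0 \<Longrightarrow> \<bar>p\<bar> < P"
proof -
  define C where "C = \<bar>Ham x 0\<bar> + 1"
  have "\<forall>\<^sub>F p in at_infinity. C \<le> H x p (u x) / \<bar>p\<bar>"
    using H_superlin[of x "u x"] unfolding filterlim_at_top by blast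
  then obtain R where R: "\<forall>p. R \<le> norm p \<longrightarrow> C \<le> H x p (u x) / \<bar>p\<bar>"
    unfolding eventually_at_infinity by blast
  define P where "P = max R 1"
  have large: "Ham x 0 < Ham x p \<and> 0 < Ham x p" if "\<bar>p\<bar> = P" for p
  proof -
    have "C \<le> Ham x p / \<bar>p\<bar>"
      using R[rule_format, of p] that unfolding Ham_def P_def by simp
    then have "C * \<bar>p\<bar> \<le> Ham x p"
      using that by (simp add: P_def pos_le_divide_eq)
    moreover have "C \<le> C * \<bar>p\<bar>"
      using that mult_left_mono[of 1 "\<bar>p\<bar>" C] by (simp add: C_def P_def)
    ultimately show ?thesis
      using C_def abs_ge_self[of "Ham x 0"] abs_ge_zero[of "Ham x 0"] by linarith
  qed
  have "\<forall>\<^sub>F w in nhds x. Ham w 0 < Ham w P \<and> 0 < Ham w P \<and> Ham w 0 < Ham w (-P) \<and> 0 < Ham w (-P)"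
    by (intro eventually_conj eventually_Ham_less eventually_Ham_gt)
      (use large[of P] large[of "-P"] P_def in auto)
  then obtain \<delta> where \<delta>: "0 < \<delta>"
    "\<And>w. \<bar>w - x\<bar> < \<delta> \<Longrightarrow> Ham w 0 < Ham w P \<and> 0 < Ham w P \<and> Ham w 0 < Ham w (-P) \<and> 0 < Ham w (-P)"
    unfolding eventually_nhds_metric dist_real_def by blast
  show thesis
  proof (rule that[OF \<delta>(1)])
    fix w p assume w: "\<bar>w - x\<bar> < \<delta>" and p: "Ham w p \<le> 0"
    have P: "0 < P" by (simp add: P_def)
    have "p < P"
      by (rule Ham_sublevel_upper[where m=0 and x=w]) (use P \<delta>(2)[OF w] p in \<open>auto intro: less_imp_le\<close>)
    moreover have "-P < p"
      by (rule Ham_sublevel_lower[where m=0 and x=w]) (use P \<delta>(2)[OF w] p in \<open>auto intro: less_imp_le\<close>)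
    ultimately show "\<bar>p\<bar> < P" by linarith
  qed
qed

lemma sublevel_meets_near:
  assumes "0 < r"
  obtains z q where "\<bar>z - x\<bar> < r" "Ham z q \<le> 0"
proof -
  define s where "s = min r 1"
  have "continuous_on {x - 1..x + 1} u"
    using u_continuous by (rule continuous_on_subset) simp
  then obtain U where "0 \<le> U" and U: "\<And>y. y \<in> {x - 1..x + 1} \<Longrightarrow> norm (u y) \<le> U"
    by (rule continuous_on_compact_bound[OF compact_Icc]) (rule that)
  define M where "M = (2 * U + 1) / s\<^sup>2"
  define \<phi> where "\<phi> y = M * (y - x)\<^sup>2" for y
  have \<phi>: "(\<phi> has_real_derivative 2 * M * (y - x)) (at y)" for y
    unfolding \<phi>_def by (auto intro!: derivative_eq_intros)
  have s: "0 < s" "s \<le> r" "s \<le> 1" using assms by (auto simp: s_def)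
  have "continuous_on {x - s..x + s} u"
    using u_continuous by (rule continuous_on_subset) simp
  then have cont: "continuous_on {x - s..x + s} (\<lambda>y. u y - \<phi> y)"
    unfolding \<phi>_def by (intro continuous_intros)
  have "{x - s..x + s} \<noteq> {}" using s(1) by simp
  from continuous_attains_sup[OF compact_Icc this cont]
  obtain z where z: "z \<in> {x - s..x + s}" "\<And>y. y \<in> {x - s..x + s} \<Longrightarrow> u y - \<phi> y \<le> u z - \<phi> z"
    by blast
  have Ms: "M * s\<^sup>2 = 2 * U + 1" using s(1) by (simp add: M_def)
  have "u (x + s) - \<phi> (x + s) < u x - \<phi> x" "u (x - s) - \<phi> (x - s) < u x - \<phi> x"
    using U[of x] U[of "x + s"] U[of "x - s"] s Ms by (auto simp: \<phi>_def abs_le_iff)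
  moreover have "u x - \<phi> x \<le> u z - \<phi> z" using z(2)[of x] s by auto
  ultimately have inside: "x - s < z" "z < x + s"
    using z(1) by (auto simp: order.order_iff_strict)
  have "y \<in> {x - s..x + s}" if "\<bar>y - z\<bar> < min (z - (x - s)) (x + s - z)" for y
    using that unfolding abs_less_iff min_less_iff_conj atLeastAtMost_iff by linarith
  then have "local_min_at (\<lambda>y. \<phi> y - u y) z"
    unfolding local_min_at_def using inside z(2)
    by (intro exI[of _ "min (z - (x - s)) (x + s - z)"]) force
  then have "Ham z (2 * M * (z - x)) \<le> 0"
    by (rule subsolution_test[OF \<phi>, rotated]) (intro continuous_intros)
  moreover have "\<bar>z - x\<bar> < r"
    using inside s unfolding abs_less_iff by linarith
  ultimately show thesis
    using that by blast
qed

lemma sublevel_nonempty: "\<exists>p. Ham x p \<le> 0"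
proof -
  obtain P \<delta> where P: "0 < \<delta>" "\<And>w p. \<bar>w - x\<bar> < \<delta> \<Longrightarrow> Ham w p \<le> 0 \<Longrightarrow> \<bar>p\<bar> < P"
    by (rule sublevel_bounded_near) (rule that)
  have "\<exists>z q. \<bar>z - x\<bar> < min \<delta> (1 / Suc n) \<and> Ham z q \<le> 0" for n :: nat
  proof -
    have "0 < min \<delta> (1 / Suc n)" using P(1) by simp
    then obtain z q where "\<bar>z - x\<bar> < min \<delta> (1 / Suc n)" "Ham z q \<le> 0"
      by (rule sublevel_meets_near) (rule that)
    then show ?thesis by blast
  qed
  then obtain Z Q where ZQ: "\<And>n. \<bar>Z n - x\<bar> < min \<delta> (1 / Suc n)" "\<And>n. Ham (Z n) (Q n) \<le> 0"
    by metis
  have "\<bar>Q n\<bar> < P" for n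
    using P(2)[of "Z n" "Q n"] ZQ(1)[of n] ZQ(2)[of n] by simp
  then have Q: "Q n \<in> {-P..P}" for n
    unfolding atLeastAtMost_iff by (meson abs_le_iff less_imp_le minus_le_iff)
  have "\<bar>Z n - x\<bar> < 1 / Suc n" for n
    using ZQ(1)[of n] by simp
  then have "(\<lambda>n. Z n - x) \<longlonglongrightarrow> 0"
    by (intro Lim_null_comparison[OF always_eventually LIMSEQ_inverse_real_of_nat])
      (auto intro: less_imp_le simp: inverse_eq_divide)
  then have Z: "Z \<longlonglongrightarrow> x" by (rule LIM_zero_cancel)
  obtain l r where lr: "strict_mono r" "(Q \<circ> r) \<longlonglongrightarrow> l"
    using compact_imp_seq_compact[OF compact_Icc] Q unfolding seq_compact_def by metis
  have "(\<lambda>n. Ham ((Z \<circ> r) n) ((Q \<circ> r) n)) \<longlonglongrightarrow> Ham x l"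
    by (rule tendsto_Ham[OF LIMSEQ_subseq_LIMSEQ[OF Z lr(1)] lr(2)])
  then have "Ham x l \<le> 0"
    by (rule tendsto_upperbound) (use ZQ(2) in \<open>auto intro: always_eventually\<close>)
  then show ?thesis ..
qed

definition sublevel :: "real \<Rightarrow> real set" where
  "sublevel x = {p. Ham x p \<le> 0}"

definition pmin :: "real \<Rightarrow> real" where
  "pmin x = Inf (sublevel x)"

definition pmax :: "real \<Rightarrow> real" where
  "pmax x = Sup (sublevel x)"

lemma sublevel_bounded: "bdd_below (sublevel x)" "bdd_above (sublevel x)"
proof -
  obtain P \<delta> where P: "0 < \<delta>" "\<And>w p. \<bar>w - x\<bar> < \<delta> \<Longrightarrow> Ham w p \<le> 0 \<Longrightarrow> \<bar>p\<bar> < P"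
    by (rule sublevel_bounded_near) (rule that)
  have "\<bar>p\<bar> < P" if "p \<in> sublevel x" for p
    using P(1) P(2)[of x p] that unfolding sublevel_def by simp
  then have "-P \<le> p" "p \<le> P" if "p \<in> sublevel x" for p
    using that by (meson abs_le_iff less_imp_le minus_le_iff)+
  then show "bdd_below (sublevel x)" "bdd_above (sublevel x)"
    by (auto intro: bdd_belowI[of _ "-P"] bdd_aboveI[of _ P])
qed

lemma Ham_continuous_slope: "continuous_on UNIV (\<lambda>p. Ham x p)"
  using DERIV_isCont[OF Ham_has_derivative] by (simp add: continuous_at_imp_continuous_on)

lemma sublevel_closed: "closed (sublevel x)"
  unfolding sublevel_def by (rule closed_Collect_le[OF Ham_continuous_slope continuous_on_const])

lemma pmin_in_sublevel: "pmin x \<in> sublevel x"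
  unfolding pmin_def using sublevel_nonempty sublevel_bounded sublevel_closed
  by (intro closed_contains_Inf) (auto simp: sublevel_def)

lemma pmax_in_sublevel: "pmax x \<in> sublevel x"
  unfolding pmax_def using sublevel_nonempty sublevel_bounded sublevel_closed
  by (intro closed_contains_Sup) (auto simp: sublevel_def)

lemma Ham_pmin: "Ham x (pmin x) \<le> 0" and Ham_pmax: "Ham x (pmax x) \<le> 0"
  using pmin_in_sublevel pmax_in_sublevel unfolding sublevel_def by auto

lemma pmin_le_pmax: "pmin x \<le> pmax x"
  unfolding pmax_def by (rule cSup_upper[OF pmin_in_sublevel sublevel_bounded(2)])

lemma Ham_neg_between:
  assumes "pmin x < p" "p < pmax x"
  shows "Ham x p < 0"
proof -
  have "Ham x p * (pmax x - pmin x) < (pmax x - p) * Ham x (pmin x) + (p - pmin x) * Ham x (pmax x)"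
    using assms by (rule Ham_strict_chord)
  also have "\<dots> \<le> 0"
    using assms Ham_pmin[of x] Ham_pmax[of x] by (intro add_nonpos_nonpos mult_nonneg_nonpos) auto
  finally show ?thesis
    using assms by (simp add: mult_less_0_iff)
qed

lemma Ham_nonpos_iff: "Ham x p \<le> 0 \<longleftrightarrow> pmin x \<le> p \<and> p \<le> pmax x"
proof
  assume "Ham x p \<le> 0"
  then show "pmin x \<le> p \<and> p \<le> pmax x"
    unfolding pmin_def pmax_def using sublevel_bounded
    by (auto intro: cInf_lower cSup_upper simp: sublevel_def)
next
  assume "pmin x \<le> p \<and> p \<le> pmax x"
  then show "Ham x p \<le> 0"
    using Ham_neg_between[of x p] Ham_pmin[of x] Ham_pmax[of x] by (cases "p = pmin x \<or> p = pmax x") auto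
qed

lemma Ham_pos_outside: "p < pmin x \<or> pmax x < p \<Longrightarrow> 0 < Ham x p"
  using Ham_nonpos_iff[of x p] by linarith

lemma pmin_periodic: "pmin (x + 1) = pmin x" and pmax_periodic: "pmax (x + 1) = pmax x"
  unfolding pmin_def pmax_def sublevel_def by (simp_all add: Ham_periodic)

lemma eventually_pmin_pmax_bounds:
  assumes "0 < \<epsilon>"
  shows "\<forall>\<^sub>F w in nhds y. pmin y - \<epsilon> < pmin w \<and> pmax w < pmax y + \<epsilon>"
proof -
  define a where "a = pmin y - \<epsilon>"
  define b where "b = pmax y + \<epsilon>"
  have pos: "0 < Ham y a" "0 < Ham y b"
    using assms pmin_le_pmax[of y] by (auto intro!: Ham_pos_outside simp: a_def b_def)
  have "\<forall>\<^sub>F w in nhds y. 0 < Ham w a \<and> 0 < Ham w b \<and> Ham w (pmin y) < Ham w a \<and> Ham w (pmin y) < Ham w b"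
    by (intro eventually_conj eventually_Ham_gt eventually_Ham_less) (use pos Ham_pmin[of y] in auto)
  then show ?thesis
  proof eventually_elim
    case (elim w)
    then have w: "0 < Ham w a" "0 < Ham w b" "Ham w (pmin y) \<le> Ham w a" "Ham w (pmin y) \<le> Ham w b"
      by (auto intro: less_imp_le)
    have ab: "a < pmin y" "pmin y < b"
      using assms pmin_le_pmax[of y] unfolding a_def b_def by linarith+
    have "a < pmin w" by (rule Ham_sublevel_lower[OF ab(1) w(3) w(1) Ham_pmin])
    moreover have "pmax w < b" by (rule Ham_sublevel_upper[OF ab(2) w(4) w(2) Ham_pmax])
    ultimately show ?case by (simp add: a_def b_def)
  qed
qed

lemma isCont_pmax: "isCont pmax y"
proof -
  have "(pmax \<longlongrightarrow> pmax y) (nhds y)"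
  proof (rule order_tendstoI)
    fix c assume "pmax y < c"
    then show "\<forall>\<^sub>F w in nhds y. pmax w < c"
      using eventually_pmin_pmax_bounds[of "c - pmax y" y] by (auto elim: eventually_mono)
  next
    fix c assume "c < pmax y"
    then obtain q where q: "c < q" "q < pmax y" using dense by blast
    show "\<forall>\<^sub>F w in nhds y. c < pmax w"
    proof (cases "pmin y < q")
      case True
      have "Ham y q < 0" by (rule Ham_neg_between[OF True q(2)])
      then show ?thesis
      proof (rule eventually_mono[OF eventually_Ham_lt])
        fix w assume "Ham w q < 0"
        then have "q \<le> pmax w" using Ham_nonpos_iff[of w q] by simp
        then show "c < pmax w" using q by linarith
      qed
    next
      case False
      then have "c < pmin y" using q by linarith
      show ?thesis
      proof (rule eventually_mono[OF eventually_pmin_pmax_bounds[of "pmin y - c" y]])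
        show "0 < pmin y - c" using \<open>c < pmin y\<close> by simp
        fix w assume "pmin y - (pmin y - c) < pmin w \<and> pmax w < pmax y + (pmin y - c)"
        then show "c < pmax w" using pmin_le_pmax[of w] by linarith
      qed
    qed
  qed
  then show ?thesis
    unfolding isCont_def tendsto_at_iff_tendsto_nhds .
qed

lemma isCont_pmin: "isCont pmin y"
proof -
  have "(pmin \<longlongrightarrow> pmin y) (nhds y)"
  proof (rule order_tendstoI)
    fix c assume "c < pmin y"
    then show "\<forall>\<^sub>F w in nhds y. c < pmin w"
      using eventually_pmin_pmax_bounds[of "pmin y - c" y] by (auto elim: eventually_mono)
  next
    fix c assume "pmin y < c"
    then obtain q where q: "pmin y < q" "q < c" using dense by blast
    show "\<forall>\<^sub>F w in nhds y. pmin w < c"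
    proof (cases "q < pmax y")
      case True
      have "Ham y q < 0" by (rule Ham_neg_between[OF q(1) True])
      then show ?thesis
      proof (rule eventually_mono[OF eventually_Ham_lt])
        fix w assume "Ham w q < 0"
        then have "pmin w \<le> q" using Ham_nonpos_iff[of w q] by simp
        then show "pmin w < c" using q by linarith
      qed
    next
      case False
      then have "pmax y < c" using q by linarith
      show ?thesis
      proof (rule eventually_mono[OF eventually_pmin_pmax_bounds[of "c - pmax y" y]])
        show "0 < c - pmax y" using \<open>pmax y < c\<close> by simp
        fix w assume "pmin y - (c - pmax y) < pmin w \<and> pmax w < pmax y + (c - pmax y)"
        then show "pmin w < c" using pmin_le_pmax[of w] by linarith
      qed
    qed
  qed
  then show ?thesis
    unfolding isCont_def tendsto_at_iff_tendsto_nhds .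
qed

lemma pmin_continuous: "continuous_on UNIV pmin" and pmax_continuous: "continuous_on UNIV pmax"
  using isCont_pmin isCont_pmax by (simp_all add: continuous_at_imp_continuous_on)

section \<open>Regularity of the viscosity solution\<close>

definition Pmin :: "real \<Rightarrow> real" where
  "Pmin x = oint 0 x pmin"

definition Pmax :: "real \<Rightarrow> real" where
  "Pmax x = oint 0 x pmax"

lemma Pmin_has_derivative: "(Pmin has_real_derivative pmin x) (at x)"
  unfolding Pmin_def[abs_def] by (rule oint_has_real_derivative[OF pmin_continuous])

lemma Pmax_has_derivative: "(Pmax has_real_derivative pmax x) (at x)"
  unfolding Pmax_def[abs_def] by (rule oint_has_real_derivative[OF pmax_continuous])

lemma Pmin_0: "Pmin 0 = 0" and Pmax_0: "Pmax 0 = 0"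
  by (simp_all add: Pmin_def Pmax_def oint_def)

text \<open>A test function with a strict viscosity inequality leaves no local minimum to
  \<open>\<phi> - u\<close> or \<open>u - \<phi>\<close>, so \<open>\<phi> - u\<close> is strictly monotone in the direction of its drift
  over a period.\<close>

lemma test_function_increment_sign:
  assumes \<phi>: "\<And>x. (\<phi> has_real_derivative \<phi>' x) (at x)"
    and \<phi>'_cont: "continuous_on UNIV \<phi>'" and \<phi>'_per: "\<And>x. \<phi>' (x + 1) = \<phi>' x"
    and strict: "(\<forall>x. 0 < Ham x (\<phi>' x)) \<or> (\<forall>x. Ham x (\<phi>' x) < 0)"
    and "a < b"
  shows "0 < (\<phi> 1 - \<phi> 0) * ((\<phi> b - u b) - (\<phi> a - u a))"
proof -
  have \<phi>_cont: "continuous_on UNIV \<phi>"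
    using \<phi> DERIV_isCont continuous_at_imp_continuous_on by blast
  have shift: "\<phi> (x + 1) - u (x + 1) = (\<phi> x - u x) + (\<phi> 1 - \<phi> 0)" for x
    using antiderivative_of_periodic_shift[OF \<phi> \<phi>'_per, of x] u_per[of x] by simp
  from strict show ?thesis
  proof
    assume pos: "\<forall>x. 0 < Ham x (\<phi>' x)"
    have no_min: "\<not> local_min_at (\<lambda>x. \<phi> x - u x) z" for z
      using subsolution_test[OF \<phi> \<phi>'_cont, of z] pos by (auto simp flip: not_le)
    have "continuous_on UNIV (\<lambda>x. \<phi> x - u x)"
      by (intro continuous_intros \<phi>_cont u_continuous)
    from no_local_min_shift_sign[OF this no_min shift \<open>a < b\<close>] show ?thesis .
  next
    assume neg: "\<forall>x. Ham x (\<phi>' x) < 0"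
    have no_min: "\<not> local_min_at (\<lambda>x. u x - \<phi> x) z" for z
      using supersolution_test[OF \<phi> \<phi>'_cont, of z] neg by (auto simp flip: not_less)
    have "continuous_on UNIV (\<lambda>x. u x - \<phi> x)"
      by (intro continuous_intros \<phi>_cont u_continuous)
    moreover have "u (x + 1) - \<phi> (x + 1) = (u x - \<phi> x) + - (\<phi> 1 - \<phi> 0)" for x
      using shift[of x] by simp
    ultimately have "0 < - (\<phi> 1 - \<phi> 0) * ((u b - \<phi> b) - (u a - \<phi> a))"
      by (rule no_local_min_shift_sign[OF _ no_min _ \<open>a < b\<close>])
    then show ?thesis by (simp add: algebra_simps)
  qed
qed

lemma primitive_combination_increment_sign:
  fixes \<alpha> \<beta> \<gamma> :: real
  assumes "(\<forall>x. 0 < Ham x (\<alpha> * pmin x + \<beta> * pmax x + \<gamma>)) \<or> (\<forall>x. Ham x (\<alpha> * pmin x + \<beta> * pmax x + \<gamma>) < 0)"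
    and "a < b"
  shows "0 < (\<alpha> * Pmin 1 + \<beta> * Pmax 1 + \<gamma>)
    * ((\<alpha> * (Pmin b - Pmin a) + \<beta> * (Pmax b - Pmax a) + \<gamma> * (b - a)) - (u b - u a))"
proof -
  let ?\<phi> = "\<lambda>x. \<alpha> * Pmin x + \<beta> * Pmax x + \<gamma> * x"
  have "(?\<phi> has_real_derivative \<alpha> * pmin x + \<beta> * pmax x + \<gamma>) (at x)" for x
    by (auto intro!: derivative_eq_intros Pmin_has_derivative Pmax_has_derivative)
  moreover have "continuous_on UNIV (\<lambda>x. \<alpha> * pmin x + \<beta> * pmax x + \<gamma>)"
    by (intro continuous_intros pmin_continuous pmax_continuous)
  moreover have "\<alpha> * pmin (x + 1) + \<beta> * pmax (x + 1) + \<gamma> = \<alpha> * pmin x + \<beta> * pmax x + \<gamma>" for x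
    by (simp add: pmin_periodic pmax_periodic)
  ultimately have "0 < (?\<phi> 1 - ?\<phi> 0) * ((?\<phi> b - u b) - (?\<phi> a - u a))"
    by (rule test_function_increment_sign[OF _ _ _ assms])
  then show ?thesis
    by (simp add: Pmin_0 Pmax_0 algebra_simps)
qed

lemma Pmax_1_nonneg: "0 \<le> Pmax 1"
proof (rule ccontr)
  assume "\<not> 0 \<le> Pmax 1"
  then have "\<forall>x. 0 < Ham x (0 * pmin x + 1 * pmax x + - Pmax 1)"
    by (simp add: Ham_pos_outside)
  from primitive_combination_increment_sign[OF disjI1[OF this], of 0 1] show False by simp
qed

lemma Pmin_1_nonpos: "Pmin 1 \<le> 0"
proof (rule ccontr)
  assume "\<not> Pmin 1 \<le> 0"
  then have "\<forall>x. 0 < Ham x (1 * pmin x + 0 * pmax x + - Pmin 1)"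
    by (simp add: Ham_pos_outside)
  from primitive_combination_increment_sign[OF disjI1[OF this], of 0 1] show False by simp
qed

lemma u_increment_le_Pmax:
  assumes "a < b"
  shows "u b - u a \<le> Pmax b - Pmax a"
proof (rule le_of_forall_lt_add_scaled[where C="b - a"])
  fix s :: real assume s: "0 < s" "s < 1"
  then have "\<forall>x. 0 < Ham x (0 * pmin x + 1 * pmax x + s)"
    by (simp add: Ham_pos_outside)
  from primitive_combination_increment_sign[OF disjI1[OF this] assms]
  have "0 < (Pmax 1 + s) * ((Pmax b - Pmax a + s * (b - a)) - (u b - u a))" by simp
  moreover have "0 < Pmax 1 + s" using Pmax_1_nonneg s by linarith
  ultimately show "u b - u a < Pmax b - Pmax a + s * (b - a)"
    using zero_less_mult_pos by fastforce
qed

lemma Pmin_increment_le_u: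
  assumes "a < b"
  shows "Pmin b - Pmin a \<le> u b - u a"
proof (rule le_of_forall_lt_add_scaled[where C="b - a"])
  fix s :: real assume s: "0 < s" "s < 1"
  then have "\<forall>x. 0 < Ham x (1 * pmin x + 0 * pmax x + - s)"
    by (simp add: Ham_pos_outside)
  from primitive_combination_increment_sign[OF disjI1[OF this] assms]
  have "0 < (s - Pmin 1) * ((u b - u a) - (Pmin b - Pmin a - s * (b - a)))"
    by (simp add: algebra_simps)
  moreover have "0 < s - Pmin 1" using Pmin_1_nonpos s by linarith
  ultimately show "Pmin b - Pmin a < u b - u a + s * (b - a)"
    using zero_less_mult_pos by fastforce
qed

lemma u_has_derivative_if_pmin_eq_pmax:
  assumes eq: "pmin y = pmax y"
  shows "(u has_real_derivative pmin y) (at y)"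
proof -
  let ?Q = "\<lambda>A w. (A w - A y) / (w - y)"
  have swap: "?Q A w = (A y - A w) / (y - w)" for A :: "real \<Rightarrow> real" and w
    by (metis minus_diff_eq minus_divide_divide)
  have quotient_bounds: "?Q Pmin w \<le> ?Q u w \<and> ?Q u w \<le> ?Q Pmax w" if "w \<noteq> y" for w
  proof (cases "y < w")
    case True
    then show ?thesis
      using Pmin_increment_le_u[OF True] u_increment_le_Pmax[OF True] by (auto intro: divide_right_mono)
  next
    case False
    then have "w < y" using that by simp
    then show ?thesis
      unfolding swap using Pmin_increment_le_u u_increment_le_Pmax by (auto intro: divide_right_mono)
  qed
  have "(?Q Pmin \<longlongrightarrow> pmin y) (at y)" "(?Q Pmax \<longlongrightarrow> pmin y) (at y)"
    using Pmin_has_derivative[of y] Pmax_has_derivative[of y] eq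
    by (simp_all add: has_field_derivative_iff)
  then have "(?Q u \<longlongrightarrow> pmin y) (at y)"
    by (rule tendsto_sandwich[rotated 2])
      (use quotient_bounds in \<open>auto simp: eventually_at_filter intro!: always_eventually\<close>)
  then show ?thesis
    by (simp add: has_field_derivative_iff)
qed

end

locale nondegenerate_hj_solution = convex_hj_solution +
  assumes u_nondeg: "\<And>x. u differentiable (at x) \<Longrightarrow> Hp H x (deriv u x) (u x) \<noteq> 0"
begin

text \<open>If the sublevel set at \<open>y\<close> were a single point, \<open>u\<close> would be differentiable at \<open>y\<close>
  with derivative the minimum point of \<open>Ham y\<close>, where \<open>Hp\<close> vanishes.\<close>

lemma pmin_less_pmax: "pmin y < pmax y"
proof (rule ccontr)
  assume "\<not> pmin y < pmax y"
  then have eq: "pmin y = pmax y" using pmin_le_pmax[of y] by simp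
  have u': "(u has_real_derivative pmin y) (at y)"
    by (rule u_has_derivative_if_pmin_eq_pmax[OF eq])
  have "Ham y (pmin y) \<le> Ham y q" for q
  proof (cases "Ham y q \<le> 0")
    case True
    then have "pmin y \<le> q \<and> q \<le> pmax y" by (simp add: Ham_nonpos_iff)
    with eq have "q = pmin y" by linarith
    then show ?thesis by simp
  next
    case False
    then show ?thesis using Ham_pmin[of y] by linarith
  qed
  then have "Hp H y (pmin y) (u y) = 0"
    using DERIV_local_min[OF Ham_has_derivative zero_less_one] by blast
  moreover have "u differentiable (at y)" "deriv u y = pmin y"
    using u' by (auto simp: real_differentiable_def DERIV_imp_deriv)
  ultimately show False
    using u_nondeg by metis
qed

lemma interpolation_increment_sign:
  assumes "0 < t" "t < 1" "a < b"
  shows "0 < (Pmin 1 + t * (Pmax 1 - Pmin 1))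
    * ((Pmin b - Pmin a) + t * ((Pmax b - Pmax a) - (Pmin b - Pmin a)) - (u b - u a))"
proof -
  have "Ham x ((1 - t) * pmin x + t * pmax x + 0) < 0" for x
  proof (rule Ham_neg_between)
    have "0 < t * (pmax x - pmin x)" "t * (pmax x - pmin x) < 1 * (pmax x - pmin x)"
      using pmin_less_pmax[of x] assms(1,2) by (auto intro: mult_strict_right_mono)
    then show "pmin x < (1 - t) * pmin x + t * pmax x + 0" "(1 - t) * pmin x + t * pmax x + 0 < pmax x"
      by (auto simp: algebra_simps)
  qed
  from primitive_combination_increment_sign[OF disjI2[OF allI[OF this]] assms(3)] show ?thesis
    by (simp add: algebra_simps)
qed

lemma mean_slope_cases: "Pmin 1 = 0 \<and> 0 < Pmax 1 \<or> Pmin 1 < 0 \<and> Pmax 1 = 0"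
proof -
  have nonzero: "Pmin 1 + t * (Pmax 1 - Pmin 1) \<noteq> 0" if "0 < t" "t < 1" for t
    using interpolation_increment_sign[OF that zero_less_one] by force
  have "\<not> (Pmin 1 < 0 \<and> 0 < Pmax 1)"
  proof
    assume h: "Pmin 1 < 0 \<and> 0 < Pmax 1"
    define t where "t = - Pmin 1 / (Pmax 1 - Pmin 1)"
    have "0 < t" "t < 1" "Pmin 1 + t * (Pmax 1 - Pmin 1) = 0"
      using h by (auto simp: t_def field_simps)
    then show False using nonzero by blast
  qed
  moreover have "\<not> (Pmin 1 = 0 \<and> Pmax 1 = 0)"
    using nonzero[of "1/2"] by auto
  ultimately show ?thesis
    using Pmin_1_nonpos Pmax_1_nonneg by linarith
qed

lemma u_increment_eq_Pmin:
  assumes mean: "Pmin 1 = 0" "0 < Pmax 1" and "a < b"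
  shows "u b - u a = Pmin b - Pmin a"
proof (rule antisym[OF le_of_forall_lt_add_scaled Pmin_increment_le_u[OF \<open>a < b\<close>]])
  fix s :: real assume s: "0 < s" "s < 1"
  have "0 < Pmin 1 + s * (Pmax 1 - Pmin 1)" using mean s by simp
  from zero_less_mult_pos[OF interpolation_increment_sign[OF s \<open>a < b\<close>] this]
  show "u b - u a < Pmin b - Pmin a + s * ((Pmax b - Pmax a) - (Pmin b - Pmin a))"
    by linarith
qed

lemma u_increment_eq_Pmax:
  assumes mean: "Pmin 1 < 0" "Pmax 1 = 0" and "a < b"
  shows "u b - u a = Pmax b - Pmax a"
proof (rule antisym[OF u_increment_le_Pmax[OF \<open>a < b\<close>] le_of_forall_lt_add_scaled])
  fix s :: real assume s: "0 < s" "s < 1"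
  then have t: "0 < 1 - s" "1 - s < 1" by auto
  let ?D = "(Pmax b - Pmax a) - (Pmin b - Pmin a)"
  have "Pmin 1 + (1 - s) * (Pmax 1 - Pmin 1) = s * Pmin 1"
    using mean by (simp add: algebra_simps)
  then have "0 < (s * Pmin 1) * ((Pmin b - Pmin a) + (1 - s) * ?D - (u b - u a))"
    using interpolation_increment_sign[OF t \<open>a < b\<close>] by simp
  moreover have "s * Pmin 1 < 0" using mean s by (simp add: mult_pos_neg)
  ultimately have "(Pmin b - Pmin a) + (1 - s) * ?D < u b - u a"
    by (metis diff_less_0_iff_less less_imp_le mult_nonpos_nonneg not_le)
  moreover have "(1 - s) * ?D = ?D - s * ?D" by (simp add: algebra_simps)
  ultimately show "Pmax b - Pmax a < u b - u a + s * ?D"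
    by linarith
qed

lemma u_eq_Pmin_or_Pmax: "(\<forall>x. u x = u 0 + Pmin x) \<or> (\<forall>x. u x = u 0 + Pmax x)"
proof -
  have primitive: "u x = u 0 + P x"
    if "\<And>a b. a < b \<Longrightarrow> u b - u a = P b - P a" "P 0 = 0" for P x
    using that(1)[of x 0] that(1)[of 0 x] that(2) by (cases x "0::real" rule: linorder_cases) auto
  from mean_slope_cases show ?thesis
    using primitive[OF u_increment_eq_Pmin Pmin_0] primitive[OF u_increment_eq_Pmax Pmax_0] by blast
qed

lemma deriv_u_eq_pmin_or_pmax: "deriv u = pmin \<and> (\<forall>x. (u has_real_derivative pmin x) (at x))
  \<or> deriv u = pmax \<and> (\<forall>x. (u has_real_derivative pmax x) (at x))"
proof -
  have "deriv u = p \<and> (\<forall>x. (u has_real_derivative p x) (at x))"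
    if "\<forall>x. u x = u 0 + P x" "\<And>x. (P has_real_derivative p x) (at x)" for P p
  proof -
    have u_eq: "u = (\<lambda>x. u 0 + P x)"
    proof
      show "u x = u 0 + P x" for x using that(1) by blast
    qed
    have "((\<lambda>x. u 0 + P x) has_real_derivative p x) (at x)" for x
      by (rule DERIV_add[OF DERIV_const that(2), simplified])
    then have "(u has_real_derivative p x) (at x)" for x
      by (subst u_eq)
    then show ?thesis by (auto intro: DERIV_imp_deriv)
  qed
  then show ?thesis
    using u_eq_Pmin_or_Pmax Pmin_has_derivative Pmax_has_derivative by blast
qed

lemma u_has_derivative: "(u has_real_derivative deriv u x) (at x)"
  using deriv_u_eq_pmin_or_pmax by auto

lemma deriv_u_continuous: "continuous_on UNIV (deriv u)"
  using deriv_u_eq_pmin_or_pmax pmin_continuous pmax_continuous by auto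

end

section \<open>The time-periodic perturbation\<close>

text \<open>The frequency 2 pi / Z gets a name of its own so that simplification keeps it atomic.\<close>

definition omegaF :: "(real \<Rightarrow> real \<Rightarrow> real \<Rightarrow> real) \<Rightarrow> (real \<Rightarrow> real) \<Rightarrow> real" where
  "omegaF H u = 2 * pi / ZC H u"

definition phaseF :: "(real \<Rightarrow> real \<Rightarrow> real \<Rightarrow> real) \<Rightarrow> (real \<Rightarrow> real) \<Rightarrow> real \<Rightarrow> real \<Rightarrow> real \<Rightarrow> real" where
  "phaseF H u x0 x t = - pi / 2 + fF H u x - fF H u x0 + omegaF H u * t"

lemma wF_eq_phaseF: "wF H u x0 \<epsilon> x t = u x + \<epsilon> * rhoF H u x * (1 + sin (phaseF H u x0 x t))"
  unfolding wF_def phaseF_def omegaF_def by (simp add: algebra_simps)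

lemma rhoF_pos: "0 < rhoF H u x"
  by (simp add: rhoF_def)

lemma wF_time_periodic: "wF H u x0 \<epsilon> x (t + TC H u) = wF H u x0 \<epsilon> x t"
proof -
  have "sin (y + omegaF H u * TC H u) = sin y" for y
  proof (cases "ZC H u" "0::real" rule: linorder_cases)
    case less
    then have "omegaF H u * TC H u = - (2 * pi)" by (simp add: omegaF_def TC_def)
    then show ?thesis using sin_periodic[of "y - 2 * pi"] by simp
  next
    case greater
    then have "omegaF H u * TC H u = 2 * pi" by (simp add: omegaF_def TC_def)
    then show ?thesis by simp
  qed (simp add: omegaF_def)
  moreover have "phaseF H u x0 x (t + TC H u) = phaseF H u x0 x t + omegaF H u * TC H u"
    unfolding phaseF_def by (simp add: algebra_simps)
  ultimately show ?thesis
    unfolding wF_eq_phaseF by simp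
qed

context nondegenerate_hj_solution
begin

lemma H_deriv_u_eq_0: "H x (deriv u x) (u x) = 0"
proof -
  have "local_min_at (\<lambda>y. u y - u y) x"
    unfolding local_min_at_def by (intro exI[of _ 1]) simp
  then show ?thesis
    using subsolution_test[OF u_has_derivative deriv_u_continuous]
      supersolution_test[OF u_has_derivative deriv_u_continuous]
    unfolding Ham_def by (meson order_antisym)
qed

lemma Bf_nonzero: "Bf H u x \<noteq> 0"
  unfolding Bf_def using u_nondeg u_has_derivative real_differentiable_def by blast

lemma Bf_continuous: "continuous_on UNIV (Bf H u)"
  unfolding Bf_def[abs_def]
  by (rule continuous_on_compose3[OF smooth3_continuous[OF smooth3_Hp[OF H_smooth]]
        continuous_on_id deriv_u_continuous u_continuous])

lemma Hu_along_u_continuous: "continuous_on UNIV (\<lambda>x. Hu H x (deriv u x) (u x))"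
  by (rule continuous_on_compose3[OF smooth3_continuous[OF smooth3_Hu[OF H_smooth]]
        continuous_on_id deriv_u_continuous u_continuous])

definition rho_rate :: "real \<Rightarrow> real" where
  "rho_rate x = (muC H u - Hu H x (deriv u x) (u x)) / Bf H u x"

lemma rho_rate_continuous: "continuous_on UNIV rho_rate"
  unfolding rho_rate_def[abs_def] using Bf_nonzero
  by (intro continuous_intros Hu_along_u_continuous Bf_continuous) auto

lemma rhoF_has_derivative: "(rhoF H u has_real_derivative rhoF H u x * rho_rate x) (at x)"
  unfolding rhoF_def[abs_def] rho_rate_def[symmetric]
  by (rule DERIV_fun_exp[OF oint_has_real_derivative[OF rho_rate_continuous]])

lemma rhoF_continuous: "continuous_on UNIV (rhoF H u)"
  using DERIV_isCont[OF rhoF_has_derivative] by (simp add: continuous_at_imp_continuous_on)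

lemma fF_has_derivative: "(fF H u has_real_derivative omegaF H u * - (1 / Bf H u x)) (at x)"
proof -
  have "continuous_on UNIV (\<lambda>\<tau>. - (1 / Bf H u \<tau>))"
    using Bf_nonzero by (intro continuous_intros Bf_continuous) auto
  then show ?thesis
    unfolding fF_def[abs_def] omegaF_def[symmetric] by (rule DERIV_cmult[OF oint_has_real_derivative])
qed

lemma wF_deriv_t:
  "deriv (\<lambda>s. wF H u x0 \<epsilon> x s) t = \<epsilon> * rhoF H u x * cos (phaseF H u x0 x t) * omegaF H u"
proof (rule DERIV_imp_deriv)
  show "((\<lambda>s. wF H u x0 \<epsilon> x s) has_real_derivative
      \<epsilon> * rhoF H u x * cos (phaseF H u x0 x t) * omegaF H u) (at t)"
    unfolding wF_eq_phaseF phaseF_def by (auto intro!: derivative_eq_intros simp: ac_simps)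
qed

lemma wF_deriv_x:
  "deriv (\<lambda>y. wF H u x0 \<epsilon> y t) x = deriv u x + \<epsilon> * rhoF H u x
     * (rho_rate x * (1 + sin (phaseF H u x0 x t)) - omegaF H u * cos (phaseF H u x0 x t) / Bf H u x)"
proof (rule DERIV_imp_deriv)
  show "((\<lambda>y. wF H u x0 \<epsilon> y t) has_real_derivative deriv u x + \<epsilon> * rhoF H u x
     * (rho_rate x * (1 + sin (phaseF H u x0 x t)) - omegaF H u * cos (phaseF H u x0 x t) / Bf H u x)) (at x)"
    unfolding wF_eq_phaseF phaseF_def
    by (auto intro!: derivative_eq_intros u_has_derivative rhoF_has_derivative fF_has_derivative
        simp: algebra_simps)
qed

lemma H_taylor_along_u:
  obtains L :: real where "0 \<le> L"
    "\<And>x h k. x \<in> {0..1} \<Longrightarrow> \<bar>h\<bar> \<le> 1 \<Longrightarrow> \<bar>k\<bar> \<le> 1 \<Longrightarrow>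
      H x (deriv u x + h) (u x + k) \<le> Bf H u x * h + Hu H x (deriv u x) (u x) * k + L * (h\<^sup>2 + k\<^sup>2)"
proof -
  have "continuous_on {0..1} (deriv u)"
    using deriv_u_continuous by (rule continuous_on_subset) simp
  then obtain D where D: "0 \<le> D" "\<And>x. x \<in> {0..1} \<Longrightarrow> norm (deriv u x) \<le> D"
    by (rule continuous_on_compact_bound[OF compact_Icc]) (rule that)
  have "continuous_on {0..1} u"
    using u_continuous by (rule continuous_on_subset) simp
  then obtain U where U: "0 \<le> U" "\<And>x. x \<in> {0..1} \<Longrightarrow> norm (u x) \<le> U"
    by (rule continuous_on_compact_bound[OF compact_Icc]) (rule that)
  obtain L where L: "0 \<le> L" "\<And>x p v h k. x \<in> {0..1} \<Longrightarrow> \<bar>p\<bar> \<le> D \<Longrightarrow> \<bar>v\<bar> \<le> U \<Longrightarrow> \<bar>h\<bar> \<le> 1 \<Longrightarrow> \<bar>k\<bar> \<le> 1 \<Longrightarrow>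
      H x (p + h) (v + k) \<le> H x p v + Hp H x p v * h + Hu H x p v * k + L * (h\<^sup>2 + k\<^sup>2)"
    by (rule smooth3_second_order_upper_bound[OF H_smooth, where a=0 and b=1 and P=D and V=U]) (rule that)
  show thesis
  proof (rule that[OF L(1)])
    fix x h k :: real assume "x \<in> {0..1}" "\<bar>h\<bar> \<le> 1" "\<bar>k\<bar> \<le> 1"
    then show "H x (deriv u x + h) (u x + k) \<le> Bf H u x * h + Hu H x (deriv u x) (u x) * k + L * (h\<^sup>2 + k\<^sup>2)"
      using L(2)[of x "deriv u x" "u x" h k] D(2)[of x] U(2)[of x] H_deriv_u_eq_0[of x] by (simp add: Bf_def)
  qed
qed

lemma perturbation_square_bound:
  obtains A :: real where "0 \<le> A"
    "\<And>x \<theta>. x \<in> {0..1} \<Longrightarrow>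
      (rhoF H u x * (rho_rate x * (1 + sin \<theta>) - omegaF H u * cos \<theta> / Bf H u x))\<^sup>2
        + (rhoF H u x * (1 + sin \<theta>))\<^sup>2 \<le> (1 + sin \<theta>) * A"
proof -
  define Q where "Q x = 4 * (rhoF H u x * rho_rate x)\<^sup>2
    + 4 * (rhoF H u x * omegaF H u / Bf H u x)\<^sup>2 + 2 * (rhoF H u x)\<^sup>2" for x
  have "continuous_on {0..1} Q"
    unfolding Q_def using Bf_nonzero
    by (intro continuous_intros continuous_on_subset[OF rhoF_continuous]
        continuous_on_subset[OF rho_rate_continuous] continuous_on_subset[OF Bf_continuous]) auto
  then obtain A where A: "0 \<le> A" "\<And>x. x \<in> {0..1} \<Longrightarrow> norm (Q x) \<le> A"
    by (rule continuous_on_compact_bound[OF compact_Icc]) (rule that)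
  show thesis
  proof (rule that[OF A(1)])
    fix x \<theta> :: real assume "x \<in> {0..1}"
    have "(rhoF H u x * (rho_rate x * (1 + sin \<theta>) - omegaF H u * cos \<theta> / Bf H u x))\<^sup>2
        + (rhoF H u x * (1 + sin \<theta>))\<^sup>2 \<le> (1 + sin \<theta>) * Q x"
      using one_plus_sin_square_bound[where P="rhoF H u x * rho_rate x"
          and Q="- (rhoF H u x * omegaF H u / Bf H u x)" and R="rhoF H u x" and \<theta>=\<theta>]
      unfolding Q_def by (simp add: algebra_simps)
    also have "\<dots> \<le> (1 + sin \<theta>) * A"
    proof (rule mult_left_mono)
      show "Q x \<le> A" using A(2)[OF \<open>x \<in> {0..1}\<close>] by (simp add: abs_le_iff)
      show "0 \<le> 1 + sin \<theta>" using sin_ge_minus_one[of \<theta>] by linarith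
    qed
    finally show "(rhoF H u x * (rho_rate x * (1 + sin \<theta>) - omegaF H u * cos \<theta> / Bf H u x))\<^sup>2
        + (rhoF H u x * (1 + sin \<theta>))\<^sup>2 \<le> (1 + sin \<theta>) * A" .
  qed
qed

text \<open>This is what \<open>rhoF\<close> and \<open>fF\<close> are made for: \<open>B \<rho>' + Hu \<rho> = \<mu> \<rho>\<close> and \<open>B f' = - \<omega>\<close>.\<close>

lemma linearized_hamiltonian_perturbation:
  "Bf H u x * (rhoF H u x * (rho_rate x * (1 + sin \<theta>) - \<omega> * cos \<theta> / Bf H u x))
     + Hu H x (deriv u x) (u x) * (rhoF H u x * (1 + sin \<theta>))
   = muC H u * (rhoF H u x * (1 + sin \<theta>)) - \<omega> * rhoF H u x * cos \<theta>"
  using Bf_nonzero[of x] by (simp add: rho_rate_def field_simps)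

lemma wF_hamiltonian_estimate:
  obtains L A :: real where "0 \<le> L" "0 \<le> A"
    "\<And>\<epsilon> x t. 0 < \<epsilon> \<Longrightarrow> \<epsilon> * (1 + 2 * A) \<le> 1 \<Longrightarrow> x \<in> {0..1} \<Longrightarrow>
      deriv (\<lambda>s. wF H u x0 \<epsilon> x s) t + H x (deriv (\<lambda>y. wF H u x0 \<epsilon> y t) x) (wF H u x0 \<epsilon> x t)
        \<le> \<epsilon> * (1 + sin (phaseF H u x0 x t)) * (muC H u * rhoF H u x + L * \<epsilon> * A)"
proof -
  obtain L :: real where L: "0 \<le> L"
    "\<And>x h k. x \<in> {0..1} \<Longrightarrow> \<bar>h\<bar> \<le> 1 \<Longrightarrow> \<bar>k\<bar> \<le> 1 \<Longrightarrow>
      H x (deriv u x + h) (u x + k) \<le> Bf H u x * h + Hu H x (deriv u x) (u x) * k + L * (h\<^sup>2 + k\<^sup>2)"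
    by (rule H_taylor_along_u) (rule that)
  obtain A :: real where A: "0 \<le> A"
    "\<And>x \<theta>. x \<in> {0..1} \<Longrightarrow>
      (rhoF H u x * (rho_rate x * (1 + sin \<theta>) - omegaF H u * cos \<theta> / Bf H u x))\<^sup>2
        + (rhoF H u x * (1 + sin \<theta>))\<^sup>2 \<le> (1 + sin \<theta>) * A"
    by (rule perturbation_square_bound) (rule that)
  show thesis
  proof (rule that[OF L(1) A(1)])
    fix \<epsilon> x t :: real
    assume \<epsilon>: "0 < \<epsilon>" "\<epsilon> * (1 + 2 * A) \<le> 1" and x: "x \<in> {0..1}"
    define \<theta> where "\<theta> = phaseF H u x0 x t"
    define \<omega> where "\<omega> = omegaF H u"
    define a where "a = rhoF H u x * (rho_rate x * (1 + sin \<theta>) - \<omega> * cos \<theta> / Bf H u x)"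
    define b where "b = rhoF H u x * (1 + sin \<theta>)"
    have ab: "a\<^sup>2 + b\<^sup>2 \<le> (1 + sin \<theta>) * A"
      unfolding a_def b_def \<omega>_def using A(2)[OF x] .
    also have "\<dots> \<le> 2 * A"
      using A(1) sin_le_one[of \<theta>] by (intro mult_right_mono) auto
    finally have "a\<^sup>2 + b\<^sup>2 \<le> 2 * A" .
    with \<epsilon> have small: "\<bar>\<epsilon> * a\<bar> \<le> 1" "\<bar>\<epsilon> * b\<bar> \<le> 1"
      using abs_mult_le_one_of_sum_squares[of a b A \<epsilon>] by simp_all
    have "deriv (\<lambda>s. wF H u x0 \<epsilon> x s) t + H x (deriv (\<lambda>y. wF H u x0 \<epsilon> y t) x) (wF H u x0 \<epsilon> x t)
        = \<epsilon> * rhoF H u x * cos \<theta> * \<omega> + H x (deriv u x + \<epsilon> * a) (u x + \<epsilon> * b)"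
      unfolding wF_deriv_t wF_deriv_x
      unfolding wF_eq_phaseF \<theta>_def[symmetric] \<omega>_def[symmetric] a_def b_def
      by (simp add: mult.assoc)
    also have "\<dots> \<le> \<epsilon> * rhoF H u x * cos \<theta> * \<omega> + (Bf H u x * (\<epsilon> * a)
        + Hu H x (deriv u x) (u x) * (\<epsilon> * b) + L * ((\<epsilon> * a)\<^sup>2 + (\<epsilon> * b)\<^sup>2))"
      using L(2)[OF x small] by simp
    also have "\<dots> = \<epsilon> * (muC H u * b) + L * (\<epsilon>\<^sup>2 * (a\<^sup>2 + b\<^sup>2))"
    proof -
      have "Bf H u x * a + Hu H x (deriv u x) (u x) * b = muC H u * b - \<omega> * rhoF H u x * cos \<theta>"
        unfolding a_def b_def by (rule linearized_hamiltonian_perturbation)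
      moreover have "Bf H u x * (\<epsilon> * a) + Hu H x (deriv u x) (u x) * (\<epsilon> * b)
          = \<epsilon> * (Bf H u x * a + Hu H x (deriv u x) (u x) * b)"
        "\<epsilon> * (muC H u * b - \<omega> * rhoF H u x * cos \<theta>) = \<epsilon> * (muC H u * b) - \<epsilon> * rhoF H u x * cos \<theta> * \<omega>"
        "(\<epsilon> * a)\<^sup>2 + (\<epsilon> * b)\<^sup>2 = \<epsilon>\<^sup>2 * (a\<^sup>2 + b\<^sup>2)"
        by (simp_all add: algebra_simps power_mult_distrib)
      ultimately show ?thesis by simp
    qed
    also have "\<dots> \<le> \<epsilon> * (muC H u * b) + L * (\<epsilon>\<^sup>2 * ((1 + sin \<theta>) * A))"
      using ab L(1) by (simp add: mult_left_mono)
    also have "\<dots> = \<epsilon> * (1 + sin \<theta>) * (muC H u * rhoF H u x + L * \<epsilon> * A)"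
      unfolding b_def by (simp add: algebra_simps power2_eq_square)
    finally show "deriv (\<lambda>s. wF H u x0 \<epsilon> x s) t + H x (deriv (\<lambda>y. wF H u x0 \<epsilon> y t) x) (wF H u x0 \<epsilon> x t)
        \<le> \<epsilon> * (1 + sin (phaseF H u x0 x t)) * (muC H u * rhoF H u x + L * \<epsilon> * A)"
      unfolding \<theta>_def .
  qed
qed

lemma rhoF_lower_bound:
  obtains r where "0 < r" "\<And>x. x \<in> {0..1} \<Longrightarrow> r \<le> rhoF H u x"
proof -
  have "continuous_on {0..1} (rhoF H u)"
    using rhoF_continuous by (rule continuous_on_subset) simp
  from continuous_attains_inf[OF compact_Icc _ this]
  obtain xm where "\<forall>x\<in>{0..1}. rhoF H u xm \<le> rhoF H u x" by auto
  then show thesis using that[of "rhoF H u xm"] rhoF_pos by blast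
qed

lemma wF_subsolution_for_small_epsilon:
  assumes mu_neg: "muC H u < 0"
  obtains \<epsilon>1 where "0 < \<epsilon>1" "\<And>\<epsilon> x t. 0 < \<epsilon> \<Longrightarrow> \<epsilon> \<le> \<epsilon>1 \<Longrightarrow> x \<in> {0..1} \<Longrightarrow>
      deriv (\<lambda>s. wF H u x0 \<epsilon> x s) t + H x (deriv (\<lambda>y. wF H u x0 \<epsilon> y t) x) (wF H u x0 \<epsilon> x t) \<le> 0"
proof -
  obtain L A :: real where LA: "0 \<le> L" "0 \<le> A"
    "\<And>\<epsilon> x t. 0 < \<epsilon> \<Longrightarrow> \<epsilon> * (1 + 2 * A) \<le> 1 \<Longrightarrow> x \<in> {0..1} \<Longrightarrow>
      deriv (\<lambda>s. wF H u x0 \<epsilon> x s) t + H x (deriv (\<lambda>y. wF H u x0 \<epsilon> y t) x) (wF H u x0 \<epsilon> x t)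
        \<le> \<epsilon> * (1 + sin (phaseF H u x0 x t)) * (muC H u * rhoF H u x + L * \<epsilon> * A)"
    by (rule wF_hamiltonian_estimate) (rule that)
  obtain r where r: "0 < r" "\<And>x. x \<in> {0..1} \<Longrightarrow> r \<le> rhoF H u x"
    by (rule rhoF_lower_bound) (rule that)
  define K where "K = (L + 1) * (A + 1)"
  have K: "1 \<le> K" "L * A \<le> K" using LA(1,2) by (simp_all add: K_def algebra_simps)
  define \<epsilon>1 where "\<epsilon>1 = min (1 / (1 + 2 * A)) (- muC H u * r / K)"
  have "0 < - muC H u * r / K"
    using mu_neg r(1) K(1) by (intro divide_pos_pos mult_pos_pos) auto
  moreover have "0 < 1 / (1 + 2 * A)"
    using LA(2) by simp
  ultimately have "0 < \<epsilon>1"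
    by (simp add: \<epsilon>1_def)
  then show thesis
  proof (rule that)
    fix \<epsilon> x t :: real assume \<epsilon>: "0 < \<epsilon>" "\<epsilon> \<le> \<epsilon>1" and x: "x \<in> {0..1}"
    have "\<epsilon> * (1 + 2 * A) \<le> 1"
      using \<epsilon> LA(2) by (simp add: \<epsilon>1_def field_simps)
    have "L * \<epsilon> * A \<le> K * \<epsilon>"
      using K(2) \<epsilon>(1) by (simp add: mult.commute mult.left_commute mult_right_mono)
    also have "\<dots> \<le> - muC H u * r"
      using \<epsilon> K(1) by (simp add: \<epsilon>1_def field_simps)
    finally have "muC H u * rhoF H u x + L * \<epsilon> * A \<le> 0"
      using mult_left_mono_neg[OF r(2)[OF x], of "muC H u"] mu_neg by linarith
    moreover have "0 \<le> \<epsilon> * (1 + sin (phaseF H u x0 x t))"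
      by (rule mult_nonneg_nonneg) (use \<epsilon>(1) sin_ge_minus_one[of "phaseF H u x0 x t"] in linarith)+
    ultimately show "deriv (\<lambda>s. wF H u x0 \<epsilon> x s) t + H x (deriv (\<lambda>y. wF H u x0 \<epsilon> y t) x) (wF H u x0 \<epsilon> x t) \<le> 0"
      using LA(3)[OF \<epsilon>(1) \<open>\<epsilon> * (1 + 2 * A) \<le> 1\<close> x, of t] mult_nonneg_nonpos by fastforce
  qed
qed

end

theorem lemma4p1:
  fixes H :: "real \<Rightarrow> real \<Rightarrow> real \<Rightarrow> real" and u0 :: "real \<Rightarrow> real"
    and \<kappa> :: real and x0 :: real
  assumes H_smooth: "smooth3 H"
    and H_per: "\<And>x p u. H (x + 1) p u = H x p u"
    and H_conv: "\<And>x p u. deriv (\<lambda>q. Hp H x q u) p > 0"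
    and H_superlin: "\<And>x u. filterlim (\<lambda>p. H x p u / \<bar>p\<bar>) at_top at_infinity"
    and kappa_pos: "\<kappa> > 0"
    and H_lip: "\<And>x p u. \<bar>Hu H x p u\<bar> \<le> \<kappa>"
    and u0_per: "\<And>x. u0 (x + 1) = u0 x"
    and u0_visc: "viscosity_solution H u0"
    and u0_nondeg: "\<And>x. u0 differentiable (at x) \<Longrightarrow> Hp H x (deriv u0 x) (u0 x) \<noteq> 0"
    and mu_neg: "muC H u0 < 0"
    and x0_in: "x0 \<in> {0..1}"
  shows "\<exists>\<epsilon>1>0. \<forall>\<epsilon>. 0 < \<epsilon> \<and> \<epsilon> \<le> \<epsilon>1 \<longrightarrow>
           (\<forall>x\<in>{0..1}. \<forall>t\<ge>0.
              wF H u0 x0 \<epsilon> x (t + TC H u0) = wF H u0 x0 \<epsilon> x t \<and>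
              deriv (\<lambda>s. wF H u0 x0 \<epsilon> x s) t
                + H x (deriv (\<lambda>y. wF H u0 x0 \<epsilon> y t) x) (wF H u0 x0 \<epsilon> x t) \<le> 0)"
proof -
  interpret nondegenerate_hj_solution H u0
    by unfold_locales (fact H_smooth H_per H_conv H_superlin u0_per u0_visc u0_nondeg)+
  obtain \<epsilon>1 where \<epsilon>1: "0 < \<epsilon>1" "\<And>\<epsilon> x t. 0 < \<epsilon> \<Longrightarrow> \<epsilon> \<le> \<epsilon>1 \<Longrightarrow> x \<in> {0..1} \<Longrightarrow>
      deriv (\<lambda>s. wF H u0 x0 \<epsilon> x s) t + H x (deriv (\<lambda>y. wF H u0 x0 \<epsilon> y t) x) (wF H u0 x0 \<epsilon> x t) \<le> 0"
    by (rule wF_subsolution_for_small_epsilon[OF mu_neg]) (rule that)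
  show ?thesis
  proof (intro exI[of _ \<epsilon>1] conjI allI impI ballI)
    show "0 < \<epsilon>1" by (rule \<epsilon>1(1))
    fix \<epsilon> x t :: real assume \<epsilon>: "0 < \<epsilon> \<and> \<epsilon> \<le> \<epsilon>1" and x: "x \<in> {0..1}" and "0 \<le> t"
    show "wF H u0 x0 \<epsilon> x (t + TC H u0) = wF H u0 x0 \<epsilon> x t"
      by (rule wF_time_periodic)
    show "deriv (\<lambda>s. wF H u0 x0 \<epsilon> x s) t
        + H x (deriv (\<lambda>y. wF H u0 x0 \<epsilon> y t) x) (wF H u0 x0 \<epsilon> x t) \<le> 0"
      using \<epsilon>1(2)[of \<epsilon> x t] \<epsilon> x by blast
  qed
qed

end
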